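(* Let $n\ge3$, let $\delta$ be a dissimilarity map on $X=\{1,\dots,n\}$, let $\mathcal{C}=\{C_1,\dots,C_m\}$ be a partial circular ordering with $m\ge 3$ blocks equipped with the balanced TSP weighting $\mu$, and for $r\neq s$ let \[ l(\delta,\mathcal{C}_{r,s}) = \frac{1}{|o(\mathcal{C}_{r,s})|}\sum_{(y_1,\dots,y_n)\in o(\mathcal{C}_{r,s})}\frac12\sum_{k=1}^n\delta(y_k,y_{k+1}).\] Then \[ l(\delta,\mathcal{C}_{r,s}) = \frac{1}{2(m-2)}Q_\delta(C_r,C_s) + T,\qquad T=\frac12\sum_{\{i,j\}\ \text{consecutive in a block}}\delta(i,j)+\frac{1}{m-2}\sum_{1\le t<u\le m}\delta(C_t,C_u),\] where $T$ does not depend on $r,s$. In particular a pair $(r,s)$ minimizes $l(\delta,\mathcal{C}_{r,s})$ if and only if it minimizes $Q_\delta(C_r,C_s)$.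
   Context: A dissimilarity map is $\delta:X\times X\to\mathbb{R}$ with $\delta(i,j)=\delta(j,i)\ge0$, $\delta(i,i)=0$. A circular ordering of $X$ is a listing $(y_1,\dots,y_n)$ of $X$ regarded cyclically ($y_{n+1}=y_1$), identified up to rotation and reversal. A partial circular ordering $\mathcal{C}=\{C_1,\dots,C_m\}$ is a partition of $X$ into nonempty blocks each equipped with a linear order (a path, up to reversal); elements are consecutive in a block if adjacent in the path; $\hat C_r$ is the set of endpoints of $C_r$ ($C_r$ itself if $|C_r|=1$). A circular ordering is consistent with $\mathcal{C}$ if every pair consecutive in a block is adjacent in it. The balanced TSP weighting is $\mu(i)=1$ for a singleton block, $\mu(i)=1/2$ for $i\in\hat C_r$ with $|\hat C_r|=2$, $\mu(i)=0$ otherwise. Set $\delta(C_r,C_s)=\sum_{i\in C_r,j\in C_s}\mu(i)\mu(j)\delta(i,j)$ and $Q_\delta(C_r,C_s)=(m-2)\delta(C_r,C_s)-\sum_{t\ne r}\delta(C_r,C_t)-\sum_{t\ne s}\delta(C_s,C_t)$. $\mathcal{C}_{r,s}$ is the set of partial circular orderings with $m-1$ blocks obtained from $\mathcal{C}$ by joining an endpoint of $C_r$ to an endpoint of $C_s$, and $o(\mathcal{C}_{r,s})$ is the set of circular orderings consistent with at least one member of $\mathcal{C}_{r,s}$. *)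

theory Defs
  imports Main "HOL-Library.Multiset" Complex_Main
begin

definition dissim :: "nat set \<Rightarrow> (nat \<Rightarrow> nat \<Rightarrow> real) \<Rightarrow> bool" where
  "dissim X d \<longleftrightarrow> (\<forall>i\<in>X. \<forall>j\<in>X. d i j = d j i \<and> d i j \<ge> 0) \<and> (\<forall>i\<in>X. d i i = 0)"

text \<open>Circular orderings: a listing of X, regarded up to rotation and reversal,
  i.e. the equivalence class of a listing.\<close>

definition circ_class :: "'a list \<Rightarrow> 'a list set" where
  "circ_class ys = {zs. \<exists>k. zs = rotate k ys \<or> zs = rotate k (rev ys)}"

definition circ_orderings :: "'a set \<Rightarrow> 'a list set set" where
  "circ_orderings X = {circ_class ys | ys. distinct ys \<and> set ys = X}"

definition cyc_adj :: "'a list \<Rightarrow> 'a \<Rightarrow> 'a \<Rightarrow> bool" where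
  "cyc_adj ys i j \<longleftrightarrow> (\<exists>k<length ys. {ys ! k, ys ! ((k + 1) mod length ys)} = {i, j})"

definition half_tour :: "('a \<Rightarrow> 'a \<Rightarrow> real) \<Rightarrow> 'a list \<Rightarrow> real" where
  "half_tour d ys = (1/2) * (\<Sum>k<length ys. d (ys ! k) (ys ! ((k + 1) mod length ys)))"

text \<open>Value on a circular ordering (class): evaluate at a representative
  (independent of the representative).\<close>
definition class_half_tour :: "('a \<Rightarrow> 'a \<Rightarrow> real) \<Rightarrow> 'a list set \<Rightarrow> real" where
  "class_half_tour d c = half_tour d (SOME ys. ys \<in> c)"

text \<open>Partial circular orderings: a list of blocks C_1..C_m (0-indexed here),
  each block a nonempty list (a path; its reversal is the same block);
  the blocks partition X.\<close>
definition partial_circ :: "'a set \<Rightarrow> 'a list list \<Rightarrow> bool" where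
  "partial_circ X Cs \<longleftrightarrow> (\<forall>B\<in>set Cs. B \<noteq> []) \<and> distinct (concat Cs) \<and> set (concat Cs) = X"

definition consec :: "'a list \<Rightarrow> 'a \<Rightarrow> 'a \<Rightarrow> bool" where
  "consec B i j \<longleftrightarrow> (\<exists>k. k + 1 < length B \<and> i = B ! k \<and> j = B ! (k + 1))"

definition consistent :: "'a list set \<Rightarrow> 'a list list \<Rightarrow> bool" where
  "consistent c P \<longleftrightarrow> (\<exists>ys\<in>c. \<forall>B\<in>set P. \<forall>i j. consec B i j \<longrightarrow> cyc_adj ys i j)"

text \<open>C_{r,s}: join an endpoint of C_r to an endpoint of C_s; other blocks unchanged.\<close>
definition join_set :: "'a list list \<Rightarrow> nat \<Rightarrow> nat \<Rightarrow> 'a list list set" where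
  "join_set Cs r s =
     {B # [Cs ! t. t \<leftarrow> [0..<length Cs], t \<noteq> r, t \<noteq> s] | B.
        B \<in> {Cs!r @ Cs!s, Cs!r @ rev (Cs!s), rev (Cs!r) @ Cs!s, rev (Cs!r) @ rev (Cs!s)}}"

definition o_join :: "'a set \<Rightarrow> 'a list list \<Rightarrow> nat \<Rightarrow> nat \<Rightarrow> 'a list set set" where
  "o_join X Cs r s = {c \<in> circ_orderings X. \<exists>P\<in>join_set Cs r s. consistent c P}"

definition l_join :: "'a set \<Rightarrow> ('a \<Rightarrow> 'a \<Rightarrow> real) \<Rightarrow> 'a list list \<Rightarrow> nat \<Rightarrow> nat \<Rightarrow> real" where
  "l_join X d Cs r s = (1 / real (card (o_join X Cs r s))) *
      (\<Sum>c\<in>o_join X Cs r s. class_half_tour d c)"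

definition mu_block :: "'a list \<Rightarrow> 'a \<Rightarrow> real" where
  "mu_block B i = (if i \<notin> set B then 0 else if length B = 1 then 1
                   else if i = hd B \<or> i = last B then 1/2 else 0)"

definition mu :: "'a list list \<Rightarrow> 'a \<Rightarrow> real" where
  "mu Cs i = (\<Sum>B\<leftarrow>Cs. mu_block B i)"

definition blk_dist :: "('a \<Rightarrow> 'a \<Rightarrow> real) \<Rightarrow> 'a list list \<Rightarrow> nat \<Rightarrow> nat \<Rightarrow> real" where
  "blk_dist d Cs r s = (\<Sum>i\<in>set (Cs!r). \<Sum>j\<in>set (Cs!s). mu Cs i * mu Cs j * d i j)"

definition Q_delta :: "('a \<Rightarrow> 'a \<Rightarrow> real) \<Rightarrow> 'a list list \<Rightarrow> nat \<Rightarrow> nat \<Rightarrow> real" where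
  "Q_delta d Cs r s = (real (length Cs) - 2) * blk_dist d Cs r s
     - (\<Sum>t\<in>{0..<length Cs} - {r}. blk_dist d Cs r t)
     - (\<Sum>t\<in>{0..<length Cs} - {s}. blk_dist d Cs s t)"

definition T_const :: "('a \<Rightarrow> 'a \<Rightarrow> real) \<Rightarrow> 'a list list \<Rightarrow> real" where
  "T_const d Cs = (1/2) * (\<Sum>B\<leftarrow>Cs. \<Sum>k<length B - 1. d (B ! k) (B ! (k + 1)))
     + (1 / (real (length Cs) - 2)) *
       (\<Sum>u<length Cs. \<Sum>t<u. blk_dist d Cs t u)"

end

theory Submission
  imports Defs "HOL-Library.Sublist"
begin

(*
  Cutting a circular ordering of o(C_{r,s}) just before the joined block gives a list
  a @ b @ w_1 @ ... @ w_{m-2}, where a and b are orientations of C_r and C_s and w_1, ..., w_{m-2}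
  is an arrangement (an order together with orientations) of the other blocks; this is a bijection.
  Averaging the tour length over these choices, every block contributes its internal path length,
  and every link between consecutive blocks contributes a mu-weighted distance between the blocks,
  because each end of a block comes first in the same number of its orientations.  In a uniformly
  random arrangement of k blocks the first and the last block are uniform and every ordered pair of
  distinct blocks is consecutive with probability 1/k.  Collecting terms expresses the average in
  terms of the delta(C_t, C_u), and the result rearranges to Q_delta(C_r, C_s) / (2(m-2)) + T.
*)

section \<open>Paths and tours\<close>

fun path_len :: "('a \<Rightarrow> 'a \<Rightarrow> real) \<Rightarrow> 'a list \<Rightarrow> real" where
  "path_len d (x # y # r) = d x y + path_len d (y # r)"
| "path_len d _ = 0"

definition tour_len :: "('a \<Rightarrow> 'a \<Rightarrow> real) \<Rightarrow> 'a list \<Rightarrow> real" where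
  "tour_len d ys = path_len d ys + d (last ys) (hd ys)"

fun path_edges :: "'a list \<Rightarrow> 'a set set" where
  "path_edges (x # y # r) = insert {x, y} (path_edges (y # r))"
| "path_edges _ = {}"

definition tour_edges :: "'a list \<Rightarrow> 'a set set" where
  "tour_edges ys = insert {last ys, hd ys} (path_edges ys)"

definition sym_fun :: "('a \<Rightarrow> 'a \<Rightarrow> real) \<Rightarrow> bool" where
  "sym_fun d \<longleftrightarrow> (\<forall>x y. d x y = d y x)"

lemma path_len_Cons: "xs \<noteq> [] \<Longrightarrow> path_len d (x # xs) = d x (hd xs) + path_len d xs"
  by (cases xs) auto

lemma path_len_append:
  "a \<noteq> [] \<Longrightarrow> b \<noteq> [] \<Longrightarrow> path_len d (a @ b) = path_len d a + d (last a) (hd b) + path_len d b"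
  by (induction a) (auto simp: path_len_Cons)

lemma path_len_rev: "sym_fun d \<Longrightarrow> path_len d (rev a) = path_len d a"
proof (induction d a rule: path_len.induct)
  case (1 d x y r)
  then show ?case
    using path_len_append[of "rev (y # r)" "[x]" d] by (simp add: last_rev sym_fun_def)
qed simp_all

lemma path_len_cong: "(\<forall>i\<in>set B. \<forall>j\<in>set B. d i j = d' i j) \<Longrightarrow> path_len d B = path_len d' B"
  by (induction d B rule: path_len.induct) auto

lemma path_len_conv_sum: "path_len d B = (\<Sum>k<length B - 1. d (B ! k) (B ! (k + 1)))"
proof (induction d B rule: path_len.induct)
  case (1 d x y r)
  then show ?case by (simp add: sum.lessThan_Suc_shift del: sum.lessThan_Suc)
qed simp_all

lemma half_tour_eq_tour_len:
  assumes "ys \<noteq> []"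
  shows "half_tour d ys = tour_len d ys / 2"
proof -
  obtain n where n: "length ys = Suc n" using assms by (cases ys) auto
  have "(\<Sum>k<length ys. d (ys ! k) (ys ! ((k + 1) mod length ys)))
      = (\<Sum>k<n. d (ys ! k) (ys ! (k + 1))) + d (ys ! n) (ys ! 0)"
    using n by (simp add: sum.lessThan_Suc)
  also have "\<dots> = tour_len d ys"
    using n assms by (simp add: tour_len_def path_len_conv_sum last_conv_nth hd_conv_nth)
  finally show ?thesis by (simp add: half_tour_def)
qed

lemma tour_len_rotate1: "tour_len d (rotate1 ys) = tour_len d ys"
proof (cases ys rule: path_edges.cases)
  case (1 x y r)
  then show ?thesis using path_len_append[of "y # r" "[x]" d] by (simp add: tour_len_def)
qed (auto simp: tour_len_def)

lemma tour_len_rotate: "tour_len d (rotate k ys) = tour_len d ys"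
  by (induction k) (simp_all add: tour_len_rotate1)

lemma tour_len_rev: "sym_fun d \<Longrightarrow> tour_len d (rev ys) = tour_len d ys"
  by (cases "ys = []") (simp_all add: tour_len_def path_len_rev hd_rev last_rev sym_fun_def)

lemma path_edges_Cons: "xs \<noteq> [] \<Longrightarrow> path_edges (x # xs) = insert {x, hd xs} (path_edges xs)"
  by (cases xs) auto

lemma path_edges_append:
  "a \<noteq> [] \<Longrightarrow> b \<noteq> [] \<Longrightarrow> path_edges (a @ b) = path_edges a \<union> {{last a, hd b}} \<union> path_edges b"
  by (induction a) (auto simp: path_edges_Cons)

lemma path_edges_append_mono: "path_edges a \<subseteq> path_edges (a @ b)"
  "path_edges b \<subseteq> path_edges (a @ b)"
  by (cases "a = []"; cases "b = []"; auto simp: path_edges_append)+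

lemma path_edges_concat: "w \<in> set ws \<Longrightarrow> path_edges w \<subseteq> path_edges (concat ws)"
  by (induction ws) (use path_edges_append_mono in fastforce)+

lemma path_edges_rev: "path_edges (rev a) = path_edges a"
proof (induction a rule: path_edges.induct)
  case (1 x y r)
  then show ?case
    using path_edges_append[of "rev (y # r)" "[x]"] by (auto simp: last_rev)
qed simp_all

lemma path_edges_conv_nth: "path_edges B = {{B ! k, B ! (k + 1)} | k. k + 1 < length B}"
proof (induction B rule: path_edges.induct)
  case (1 x y r)
  have "{f k | k. k < Suc n} = insert (f 0) {f (Suc k) | k. k < n}" for f :: "nat \<Rightarrow> 'a set" and n
    by (auto simp: less_Suc_eq_0_disj)
  from this[of "\<lambda>k. {(x # y # r) ! k, (x # y # r) ! (k + 1)}" "length r"] show ?case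
    using 1 by simp
qed auto

lemma path_edges_subset: "e \<in> path_edges B \<Longrightarrow> e \<subseteq> set B"
  by (auto simp: path_edges_conv_nth)

lemma consec_imp_path_edge: "consec B i j \<Longrightarrow> {i, j} \<in> path_edges B"
  unfolding consec_def path_edges_conv_nth by blast

lemma cyc_adj_iff_tour_edge:
  assumes "ys \<noteq> []"
  shows "cyc_adj ys i j \<longleftrightarrow> {i, j} \<in> tour_edges ys"
proof -
  obtain n where n: "length ys = Suc n" using assms by (cases ys) auto
  have "cyc_adj ys i j \<longleftrightarrow> (\<exists>k<n. {ys ! k, ys ! (k + 1)} = {i, j}) \<or> {ys ! n, ys ! 0} = {i, j}"
    unfolding cyc_adj_def n by (simp add: Ex_less_Suc disj_commute cong: conj_cong)
  then show ?thesis
    using n assms by (auto simp: tour_edges_def path_edges_conv_nth last_conv_nth hd_conv_nth)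
qed

lemma tour_edges_append:
  "a \<noteq> [] \<Longrightarrow> b \<noteq> [] \<Longrightarrow>
   tour_edges (a @ b) = insert {last b, hd a} (path_edges a \<union> {{last a, hd b}} \<union> path_edges b)"
  by (simp add: tour_edges_def path_edges_append)

lemma tour_edges_rotate1: "tour_edges (rotate1 ys) = tour_edges ys"
proof (cases ys rule: path_edges.cases)
  case (1 x y r)
  then show ?thesis
    using path_edges_append[of "y # r" "[x]"] by (auto simp: tour_edges_def insert_commute)
qed auto

lemma tour_edges_rotate: "tour_edges (rotate k ys) = tour_edges ys"
  by (induction k) (simp_all add: tour_edges_rotate1)

lemma tour_edges_rev: "tour_edges (rev ys) = tour_edges ys"
  by (cases "ys = []") (auto simp: tour_edges_def path_edges_rev hd_rev last_rev)

section \<open>Circular orderings\<close>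

lemma rev_rotate: "rev (rotate j xs) = rotate (length xs - j mod length xs) (rev xs)"
proof (cases "xs = []")
  case True then show ?thesis by simp
next
  case False
  define L where "L = length xs"
  have L: "L > 0" using False by (simp add: L_def)
  have "rotate (L - j mod L) (rev xs) = rev (rotate (L - (L - j mod L) mod L) xs)"
    by (simp add: rotate_rev L_def)
  also have "rotate (L - (L - j mod L) mod L) xs = rotate j xs"
  proof -
    have "(L - (L - j mod L) mod L) mod L = j mod L"
    proof (cases "j mod L = 0")
      case True then show ?thesis using L by simp
    next
      case False
      then have "L - j mod L < L" using L by simp
      then have "(L - j mod L) mod L = L - j mod L" by simp
      then show ?thesis using L by (simp add: le_less mod_less_divisor)
    qed
    then show ?thesis
      by (metis L_def rotate_conv_mod)
  qed
  finally show ?thesis by (simp add: L_def)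
qed

lemma circ_class_refl: "ys \<in> circ_class ys"
  unfolding circ_class_def by (auto intro: exI[of _ 0])

lemma rotate_in_circ_class: "zs \<in> circ_class ys \<Longrightarrow> rotate k zs \<in> circ_class ys"
  unfolding circ_class_def by (auto simp: rotate_rotate)

lemma rev_in_circ_class: "zs \<in> circ_class ys \<Longrightarrow> rev zs \<in> circ_class ys"
proof -
  assume "zs \<in> circ_class ys"
  then obtain k where k: "zs = rotate k ys \<or> zs = rotate k (rev ys)" by (auto simp: circ_class_def)
  then show ?thesis
  proof
    assume "zs = rotate k ys"
    then have "rev zs = rotate (length ys - k mod length ys) (rev ys)" by (simp add: rev_rotate)
    then show ?thesis unfolding circ_class_def by blast
  next
    assume "zs = rotate k (rev ys)"
    then have "rev zs = rotate (length ys - k mod length ys) (rev (rev ys))"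
      using rev_rotate[of k "rev ys"] by simp
    then show ?thesis unfolding circ_class_def by auto
  qed
qed

lemma rotate_inverse: "rotate (length ys - k mod length ys) (rotate k ys) = ys"
proof (cases "ys = []")
  case True then show ?thesis by simp
next
  case False
  define L where "L = length ys"
  have L: "L > 0" using False by (simp add: L_def)
  have "L - k mod L + k = L + k div L * L"
    using div_mult_mod_eq[of k L] mod_less_divisor[OF L, of k] by linarith
  then have "(L - k mod L + k) mod L = 0" by simp
  then have "rotate (L - k mod L + k) ys = ys"
    by (metis L_def rotate_conv_mod rotate0 id_apply)
  then show ?thesis by (simp add: rotate_rotate L_def)
qed

lemma circ_class_sym: "zs \<in> circ_class ys \<Longrightarrow> ys \<in> circ_class zs"
proof -
  assume "zs \<in> circ_class ys"
  then obtain k where k: "zs = rotate k ys \<or> zs = rotate k (rev ys)" by (auto simp: circ_class_def)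
  then show ?thesis
  proof
    assume "zs = rotate k ys"
    then have "ys = rotate (length ys - k mod length ys) zs" by (simp add: rotate_inverse)
    then show ?thesis unfolding circ_class_def by blast
  next
    assume z: "zs = rotate k (rev ys)"
    then have "rev zs = rotate (length ys - k mod length ys) ys"
      using rev_rotate[of k "rev ys"] by simp
    then have "ys = rotate (length ys - (length ys - k mod length ys) mod length ys) (rev zs)"
      using rotate_inverse[of ys "length ys - k mod length ys"] by simp
    then show ?thesis unfolding circ_class_def by blast
  qed
qed

lemma circ_class_eq: "zs \<in> circ_class ys \<Longrightarrow> circ_class zs = circ_class ys"
proof
  assume z: "zs \<in> circ_class ys"
  show "circ_class zs \<subseteq> circ_class ys"
  proof
    fix x assume "x \<in> circ_class zs"
    then obtain k where "x = rotate k zs \<or> x = rotate k (rev zs)" by (auto simp: circ_class_def)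
    then show "x \<in> circ_class ys" using z rotate_in_circ_class rev_in_circ_class by metis
  qed
  have y: "ys \<in> circ_class zs" using circ_class_sym z .
  show "circ_class ys \<subseteq> circ_class zs"
  proof
    fix x assume "x \<in> circ_class ys"
    then obtain k where "x = rotate k ys \<or> x = rotate k (rev ys)" by (auto simp: circ_class_def)
    then show "x \<in> circ_class zs" using y rotate_in_circ_class rev_in_circ_class by metis
  qed
qed

lemma circ_class_D:
  assumes "zs \<in> circ_class ys"
  shows "set zs = set ys" "distinct zs = distinct ys" "length zs = length ys"
    "tour_edges zs = tour_edges ys" "sym_fun d \<Longrightarrow> tour_len d zs = tour_len d ys"
  using assms
  by (auto simp: circ_class_def tour_edges_rotate tour_edges_rev tour_len_rotate tour_len_rev)

lemma distinct_hd_eq_last_iff: "distinct B \<Longrightarrow> B \<noteq> [] \<Longrightarrow> hd B = last B \<longleftrightarrow> length B = 1"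
  by (cases B rule: rev_cases) (auto simp: hd_append split: if_splits)

lemma tour_edge_at_prefix_end:
  assumes "distinct (Q @ rest)" "Q \<noteq> []" "rest \<noteq> []" "y \<notin> set Q"
    "{last Q, y} \<in> tour_edges (Q @ rest)"
  shows "y = hd rest \<or> (length Q = 1 \<and> y = last rest)"
proof -
  have lQ: "last Q \<in> set Q" using assms(2) by simp
  have lr: "last Q \<notin> set rest" using assms(1) lQ by auto
  have hr: "last rest \<in> set rest" using assms(3) by simp
  consider "{last Q, y} = {last rest, hd Q}" | "{last Q, y} \<in> path_edges Q"
    | "{last Q, y} = {last Q, hd rest}" | "{last Q, y} \<in> path_edges rest"
    using assms(5) tour_edges_append[OF assms(2,3)] by auto
  then show ?thesis
  proof cases
    case 1
    then have "last Q = hd Q" "y = last rest" using lr hr by (auto simp: doubleton_eq_iff)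
    moreover have "length Q = 1"
      using distinct_hd_eq_last_iff[of Q] assms(1,2) \<open>last Q = hd Q\<close> by simp
    ultimately show ?thesis by simp
  next
    case 2 then have "y \<in> set Q" using path_edges_subset by blast
    then show ?thesis using assms(4) by simp
  next
    case 3 then show ?thesis using assms(4) lQ by (auto simp: doubleton_eq_iff)
  next
    case 4 then have "last Q \<in> set rest" using path_edges_subset by blast
    then show ?thesis using lr by simp
  qed
qed

lemma circ_class_path_prefix:
  assumes "distinct ys" "Q \<noteq> []" "distinct Q" "set Q \<subseteq> set ys" "length Q < length ys"
    "path_edges Q \<subseteq> tour_edges ys"
  shows "\<exists>zs\<in>circ_class ys. \<exists>rest. zs = Q @ rest"
  using assms
proof (induction Q rule: rev_induct)
  case Nil then show ?case by simp
next
  case (snoc y Q)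
  show ?case
  proof (cases "Q = []")
    case True
    then have "y \<in> set ys" using snoc by simp
    then obtain a b where ab: "ys = a @ y # b" by (meson split_list)
    have "rotate (length a) ys = (y # b) @ a" using ab by (simp add: rotate_append)
    then show ?thesis using True rotate_in_circ_class[OF circ_class_refl]
      by (metis append_Cons append_Nil)
  next
    case False
    have le: "path_edges (Q @ [y]) = path_edges Q \<union> {{last Q, y}}"
      using path_edges_append[OF False, of "[y]"] by simp
    have "\<exists>zs\<in>circ_class ys. \<exists>rest. zs = Q @ rest"
      using snoc.IH[OF snoc.prems(1) False] snoc.prems le by auto
    then obtain zs rest where zs: "zs \<in> circ_class ys" "zs = Q @ rest" by blast
    have props: "distinct zs" "length zs = length ys" "tour_edges zs = tour_edges ys"
      using circ_class_D[OF zs(1)] snoc.prems(1) by auto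
    have rne: "rest \<noteq> []" using props(2) zs(2) snoc.prems(5) by auto
    have yQ: "y \<notin> set Q" using snoc.prems(3) by simp
    have e: "{last Q, y} \<in> tour_edges (Q @ rest)" using snoc.prems(6) le props(3) zs(2) by auto
    from tour_edge_at_prefix_end[OF _ False rne yQ e] props(1) zs(2)
    consider "y = hd rest" | "length Q = 1" "y = last rest" by auto
    then show ?thesis
    proof cases
      case 1
      then have "zs = (Q @ [y]) @ tl rest" using zs(2) rne by simp
      then show ?thesis using zs(1) by blast
    next
      case 2
      then obtain x where x: "Q = [x]" by (cases Q) (auto simp: length_Suc_conv)
      have "rev zs = rev rest @ [x]" using zs(2) x by simp
      then have "rotate (length rest) (rev zs) = [x] @ rev rest"
        by (metis length_rev rotate_append)
      also have "rev rest = y # tl (rev rest)" using 2 rne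
        by (metis hd_rev list.collapse rev_is_Nil_conv)
      finally have "rotate (length rest) (rev zs) = (Q @ [y]) @ tl (rev rest)" using x by simp
      moreover have "rotate (length rest) (rev zs) \<in> circ_class ys"
        using rotate_in_circ_class[OF rev_in_circ_class[OF zs(1)]] .
      ultimately show ?thesis by metis
    qed
  qed
qed

lemma rotate_append_cases:
  assumes "A \<noteq> []"
  obtains i where "i < length A" "rotate k (A @ C) = drop i A @ C @ take i A"
    | j where "j < length C" "rotate k (A @ C) = drop j C @ A @ take j C"
proof -
  define k' where "k' = k mod length (A @ C)"
  have k': "k' < length (A @ C)" using assms by (simp add: k'_def)
  have rot: "rotate k (A @ C) = drop k' (A @ C) @ take k' (A @ C)"
    by (simp add: rotate_drop_take k'_def)
  show ?thesis
  proof (cases "k' < length A")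
    case True
    then show ?thesis using rot that(1)[of k'] by simp
  next
    case False
    then show ?thesis using rot k' that(2)[of "k' - length A"] by simp
  qed
qed

lemma prefix_rotate_sublist:
  assumes "prefix Q (rotate k (A @ C))" "Q \<noteq> []" "A \<noteq> []" "set Q \<inter> set A = {}"
  shows "sublist Q C"
  using assms(3)
proof (cases rule: rotate_append_cases[where A = A and C = C and k = k])
  case (1 i)
  then have "hd Q = hd (drop i A)" using assms(1,2)
    by (metis append_is_Nil_conv drop_eq_Nil hd_append2 leD prefix_def)
  moreover have "hd (drop i A) \<in> set A" using 1 by (metis drop_eq_Nil hd_in_set in_set_dropD leD)
  ultimately show ?thesis using assms(2,4) by (metis disjoint_iff hd_in_set)
next
  case (2 j)
  then have "prefix Q (drop j C) \<or> (\<exists>us. Q = drop j C @ us \<and> prefix us (A @ take j C))"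
    using assms(1) by (simp add: prefix_append)
  then show ?thesis
  proof
    assume "prefix Q (drop j C)"
    then show ?thesis
      by (metis append_take_drop_id prefix_imp_sublist sublist_append_leftI sublist_order.order_trans)
  next
    assume "\<exists>us. Q = drop j C @ us \<and> prefix us (A @ take j C)"
    then obtain us where us: "Q = drop j C @ us" "prefix us (A @ take j C)" by blast
    show ?thesis
    proof (cases "us = []")
      case True
      then show ?thesis using us by (metis append_Nil2 append_take_drop_id sublist_append_leftI)
    next
      case False
      then have "hd A \<in> set Q" using us assms(3)
        by (metis Un_iff hd_append2 hd_in_set prefix_def set_append)
      then show ?thesis using assms(3,4) by (meson disjoint_iff hd_in_set)
    qed
  qed
qed

lemma rotate_fixes_prefix_block:
  assumes "distinct (A @ C)" "A \<noteq> []" "C \<noteq> []" "rotate k (A @ C) = A' @ C'"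
    "length A' = length A" "set A' = set A"
  shows "rotate k (A @ C) = A @ C"
  using assms(2)
proof (cases rule: rotate_append_cases[where A = A and C = C and k = k])
  case (1 i)
  show ?thesis
  proof (cases "i = 0")
    case False
    have "take (length A) (rotate k (A @ C)) = A'" using assms(4,5) by simp
    then have "A' = drop i A @ take i (C @ take i A)" using 1 by simp
    moreover have "hd C \<in> set (take i (C @ take i A))" using False assms(3)
      by (metis hd_append2 hd_in_set hd_take take_eq_Nil not_gr0 append_is_Nil_conv)
    ultimately have "hd C \<in> set A" using assms(6) by auto
    then show ?thesis using assms(1,3) by (meson disjoint_iff distinct_append hd_in_set)
  qed (use 1 in simp)
next
  case (2 j)
  then have "hd (rotate k (A @ C)) \<in> set C"
    by (metis drop_eq_Nil hd_append2 hd_in_set in_set_dropD leD)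
  moreover have "A' \<noteq> []" using assms(2,5) by auto
  then have "hd (rotate k (A @ C)) \<in> set A" using assms(4,6) by (metis hd_append2 hd_in_set)
  ultimately show ?thesis using assms(1) by auto
qed

lemma tour_path_is_segment:
  assumes "distinct (B @ rest)" "B \<noteq> []" "Q \<noteq> []" "distinct Q" "set Q \<subseteq> set rest"
    "path_edges Q \<subseteq> tour_edges (B @ rest)"
  shows "sublist Q rest \<or> sublist (rev Q) rest"
proof -
  have QB: "set Q \<inter> set B = {}" using assms(1,5) by auto
  have "length Q \<le> length rest"
    using card_mono[OF _ assms(5)] assms(1,4) by (simp add: distinct_card[symmetric])
  then have "length Q < length (B @ rest)" using assms(2)
    by (simp add: less_add_same_cancel2 order_le_less_trans)
  then obtain zs rest' where zs: "zs \<in> circ_class (B @ rest)" "zs = Q @ rest'"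
    using circ_class_path_prefix[OF assms(1,3,4) _ _ assms(6)] assms(5) by auto
  then obtain k where "zs = rotate k (B @ rest) \<or> zs = rotate k (rev (B @ rest))"
    unfolding circ_class_def by blast
  then show ?thesis
  proof
    assume "zs = rotate k (B @ rest)"
    then have "prefix Q (rotate k (B @ rest))" using zs(2) by (metis prefixI)
    then show ?thesis using prefix_rotate_sublist[OF _ assms(3,2) QB] by blast
  next
    assume "zs = rotate k (rev (B @ rest))"
    also have "rev (B @ rest) = rotate (length B) (rev B @ rev rest)"
      using rotate_append[of "rev B" "rev rest"] by simp
    finally have "prefix Q (rotate (k + length B) (rev B @ rev rest))"
      using zs(2) by (simp add: rotate_rotate) (metis prefixI)
    then have "sublist Q (rev rest)"
      using prefix_rotate_sublist[OF _ assms(3), of _ "rev B"] assms(2) QB by auto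
    then show ?thesis by (simp add: sublist_rev_right)
  qed
qed

lemma circ_class_fixed_block:
  assumes "distinct (A @ C)" "A \<noteq> []" "C \<noteq> []" "A' @ C' \<in> circ_class (A @ C)"
    "length A' = length A" "set A' = set A"
  shows "A' @ C' = A @ C \<or> A' @ C' = rev A @ rev C"
proof -
  obtain k where "A' @ C' = rotate k (A @ C) \<or> A' @ C' = rotate k (rev (A @ C))"
    using assms(4) unfolding circ_class_def by blast
  then show ?thesis
  proof
    assume h: "A' @ C' = rotate k (A @ C)"
    then show ?thesis using rotate_fixes_prefix_block[OF assms(1-3) h[symmetric] assms(5,6)] by simp
  next
    assume h: "A' @ C' = rotate k (rev (A @ C))"
    have "rev (A @ C) = rotate (length A) (rev A @ rev C)"
      using rotate_append[of "rev A" "rev C"] by simp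
    then have "rotate (k + length A) (rev A @ rev C) = A' @ C'" using h by (simp add: rotate_rotate)
    then show ?thesis
      using rotate_fixes_prefix_block[of "rev A" "rev C" "k + length A" A' C'] assms(1-3,5,6)
      by auto
  qed
qed

section \<open>Arrangements of blocks\<close>

definition orientations :: "'a list \<Rightarrow> 'a list set" where "orientations B = {B, rev B}"

definition arrangements :: "('i \<Rightarrow> 'a list) \<Rightarrow> 'i set \<Rightarrow> 'a list list set" where
  "arrangements blk K =
     {ws. \<exists>ts. distinct ts \<and> set ts = K \<and> list_all2 (\<lambda>w t. w \<in> orientations (blk t)) ws ts}"

definition disjoint_blocks :: "('i \<Rightarrow> 'a list) \<Rightarrow> 'i set \<Rightarrow> bool" where
  "disjoint_blocks blk U \<longleftrightarrow> (\<forall>t\<in>U. blk t \<noteq> [] \<and> distinct (blk t)) \<and>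
     (\<forall>t\<in>U. \<forall>u\<in>U. t \<noteq> u \<longrightarrow> set (blk t) \<inter> set (blk u) = {})"

lemma orientations_D:
  assumes "w \<in> orientations B"
  shows "set w = set B" "length w = length B" "distinct w = distinct B" "(w = []) = (B = [])"
    "path_edges w = path_edges B" "sym_fun d \<Longrightarrow> path_len d w = path_len d B"
  using assms by (auto simp: orientations_def path_edges_rev path_len_rev)

lemma self_in_orientations: "B \<in> orientations B" by (simp add: orientations_def)
lemma finite_orientations: "finite (orientations B)" by (simp add: orientations_def)

lemma disjoint_blocks_unique:
  assumes "disjoint_blocks blk U" "t \<in> U" "u \<in> U" "x \<in> set (blk t)" "x \<in> set (blk u)"
  shows "t = u"
  using assms unfolding disjoint_blocks_def by blast

lemma disjoint_blocks_disjoint: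
  "disjoint_blocks blk U \<Longrightarrow> t \<in> U \<Longrightarrow> u \<in> U \<Longrightarrow> t \<noteq> u \<Longrightarrow> set (blk t) \<inter> set (blk u) = {}"
  by (simp add: disjoint_blocks_def)

lemma disjoint_blocks_orientation:
  assumes "disjoint_blocks blk U" "t \<in> U" "w \<in> orientations (blk t)"
  shows "w \<noteq> []" "distinct w" "set w = set (blk t)"
proof -
  have "blk t \<noteq> []" "distinct (blk t)" using assms(1,2) unfolding disjoint_blocks_def by auto
  then show "w \<noteq> []" "distinct w" "set w = set (blk t)" using orientations_D[OF assms(3)] by auto
qed

lemma hd_orientation_in_block:
  "disjoint_blocks blk U \<Longrightarrow> t \<in> U \<Longrightarrow> w \<in> orientations (blk t) \<Longrightarrow> hd w \<in> set (blk t)"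
  using disjoint_blocks_orientation by (metis hd_in_set)

lemma disjoint_blocks_UN_Diff:
  assumes "disjoint_blocks blk U" "K \<subseteq> U" "V \<subseteq> K"
  shows "(\<Union>t\<in>K. set (blk t)) - (\<Union>t\<in>V. set (blk t)) = (\<Union>t\<in>K - V. set (blk t))"
proof -
  have "x \<notin> set (blk v)" if "t \<in> K - V" "x \<in> set (blk t)" "v \<in> V" for t x v
    using disjoint_blocks_unique[OF assms(1), of t v x] that assms(2,3) by blast
  then show ?thesis by blast
qed

lemma arrangements_empty: "arrangements blk {} = {[]}"
  by (auto simp: arrangements_def)

lemma Nil_in_arrangements_iff: "[] \<in> arrangements blk K \<longleftrightarrow> K = {}"
  by (auto simp: arrangements_def)

lemma Cons_in_arrangements_iff:
  "w # ws \<in> arrangements blk K \<longleftrightarrow> (\<exists>t\<in>K. w \<in> orientations (blk t) \<and> ws \<in> arrangements blk (K - {t}))"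
proof
  assume "w # ws \<in> arrangements blk K"
  then obtain ts where ts: "distinct ts" "set ts = K"
    "list_all2 (\<lambda>w t. w \<in> orientations (blk t)) (w # ws) ts"
    by (auto simp: arrangements_def)
  then obtain t ts' where t: "ts = t # ts'" by (cases ts) auto
  have "set ts' = K - {t}" using ts t by auto
  then show "\<exists>t\<in>K. w \<in> orientations (blk t) \<and> ws \<in> arrangements blk (K - {t})"
    using ts t unfolding arrangements_def by auto
next
  assume "\<exists>t\<in>K. w \<in> orientations (blk t) \<and> ws \<in> arrangements blk (K - {t})"
  then obtain t ts where t: "t \<in> K" "w \<in> orientations (blk t)" "distinct ts" "set ts = K - {t}"
    "list_all2 (\<lambda>w t. w \<in> orientations (blk t)) ws ts" by (auto simp: arrangements_def)
  then show "w # ws \<in> arrangements blk K" unfolding arrangements_def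
    by (intro CollectI exI[of _ "t # ts"]) auto
qed

lemma set_concat_arrangement: "ws \<in> arrangements blk K \<Longrightarrow> set (concat ws) = (\<Union>t\<in>K. set (blk t))"
proof (induction ws arbitrary: K)
  case Nil then show ?case by (simp add: Nil_in_arrangements_iff)
next
  case (Cons w ws)
  then obtain t where t: "t \<in> K" "w \<in> orientations (blk t)" "ws \<in> arrangements blk (K - {t})"
    by (auto simp: Cons_in_arrangements_iff)
  then have "set (concat (w # ws)) = set (blk t) \<union> (\<Union>u\<in>K - {t}. set (blk u))"
    using Cons.IH[OF t(3)] orientations_D(1)[OF t(2)] by simp
  then show ?case using t(1) by blast
qed

lemma length_arrangement: "ws \<in> arrangements blk K \<Longrightarrow> length ws = card K"
  by (auto simp: arrangements_def list_all2_lengthD distinct_card)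

lemma arrangement_elem_orientation:
  "ws \<in> arrangements blk K \<Longrightarrow> w \<in> set ws \<Longrightarrow> \<exists>t\<in>K. w \<in> orientations (blk t)"
proof (induction ws arbitrary: K)
  case Nil then show ?case by simp
next
  case (Cons w' ws)
  then obtain t where t: "t \<in> K" "w' \<in> orientations (blk t)" "ws \<in> arrangements blk (K - {t})"
    by (auto simp: Cons_in_arrangements_iff)
  then show ?case using Cons by auto
qed

lemma finite_arrangements: "finite K \<Longrightarrow> finite (arrangements blk K)"
proof -
  assume f: "finite K"
  have "arrangements blk K \<subseteq> {ws. set ws \<subseteq> (\<Union>t\<in>K. orientations (blk t)) \<and> length ws = card K}"
  proof
    fix ws assume ws: "ws \<in> arrangements blk K"
    have "set ws \<subseteq> (\<Union>t\<in>K. orientations (blk t))"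
    proof
      fix w assume "w \<in> set ws"
      then show "w \<in> (\<Union>t\<in>K. orientations (blk t))" using arrangement_elem_orientation[OF ws]
        by blast
    qed
    then show "ws \<in> {ws. set ws \<subseteq> (\<Union>t\<in>K. orientations (blk t)) \<and> length ws = card K}"
      using length_arrangement[OF ws] by simp
  qed
  moreover have "finite {ws. set ws \<subseteq> (\<Union>t\<in>K. orientations (blk t)) \<and> length ws = card K}"
    using f by (intro finite_lists_length_eq) (simp add: finite_orientations)
  ultimately show ?thesis by (rule finite_subset)
qed

lemma distinct_concat_arrangement:
  assumes "disjoint_blocks blk U" "K \<subseteq> U" "ws \<in> arrangements blk K"
  shows "distinct (concat ws)"
  using assms(2,3)
proof (induction ws arbitrary: K)
  case Nil then show ?case by simp
next
  case (Cons w ws)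
  then obtain t where t: "t \<in> K" "w \<in> orientations (blk t)" "ws \<in> arrangements blk (K - {t})"
    by (auto simp: Cons_in_arrangements_iff)
  have tU: "t \<in> U" using t(1) Cons.prems(1) by blast
  have d1: "distinct w" using disjoint_blocks_orientation(2)[OF assms(1) tU t(2)] .
  have d2: "distinct (concat ws)" using Cons.IH[OF _ t(3)] Cons.prems(1) by blast
  have "set w \<inter> set (concat ws) = {}"
  proof -
    have "set (concat ws) = (\<Union>u\<in>K - {t}. set (blk u))" using set_concat_arrangement t(3) .
    moreover have "set w = set (blk t)" using orientations_D(1)[OF t(2)] .
    ultimately show ?thesis
      using disjoint_blocks_UN_Diff[OF assms(1) Cons.prems(1), of "{t}"] t(1) by auto
  qed
  then show ?case using d1 d2 by simp
qed

lemma sublist_append_disjoint: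
  assumes "sublist w' (w @ b)" "w' \<noteq> []" "set w' \<inter> set w = {}"
  shows "sublist w' b"
proof -
  have "sublist w' w \<or> sublist w' b \<or> (\<exists>xs1 xs2. w' = xs1 @ xs2 \<and> suffix xs1 w \<and> prefix xs2 b)"
    using assms(1) sublist_append by metis
  then show ?thesis
  proof (elim disjE exE conjE)
    assume "sublist w' w"
    then have "set w' \<subseteq> set w" by (meson set_mono_sublist)
    then have "set w' = {}" using assms(3) by (simp add: Int_absorb2)
    then show ?thesis using assms(2) by simp
  next
    assume "sublist w' b" then show ?thesis .
  next
    fix xs1 xs2 assume 3: "w' = xs1 @ xs2" "suffix xs1 w" "prefix xs2 b"
    show ?thesis
    proof (cases "xs1 = []")
      case True then show ?thesis using 3(1,3) prefix_imp_sublist by (metis append_Nil)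
    next
      case False
      then have "hd xs1 \<in> set xs1" by simp
      then have "hd xs1 \<in> set w" using 3(2) set_mono_suffix by blast
      moreover have "hd xs1 \<in> set w'" using False 3(1) by simp
      ultimately show ?thesis using assms(3) by auto
    qed
  qed
qed

lemma prefix_if_sublist_through_hd:
  assumes "distinct (x # xs)" "x \<in> set w" "sublist w (x # xs)"
  shows "\<exists>b. x # xs = w @ b"
proof -
  obtain a b where ab: "x # xs = a @ w @ b" using assms(3) by (auto simp: sublist_def)
  have "a = []"
  proof (rule ccontr)
    assume "a \<noteq> []"
    then have "x \<in> set a" using ab by (cases a) auto
    then show False using assms(1,2) ab by auto
  qed
  then show ?thesis using ab by simp
qed

lemma concat_arrangement_if_sublists:
  assumes "disjoint_blocks blk U" "finite K" "K \<subseteq> U" "distinct rest"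
    "set rest = (\<Union>t\<in>K. set (blk t))" "\<forall>t\<in>K. \<exists>w\<in>orientations (blk t). sublist w rest"
  shows "rest \<in> concat ` arrangements blk K"
  using assms(2-)
proof (induction K arbitrary: rest rule: finite_remove_induct)
  case empty
  then show ?case by (simp add: arrangements_empty)
next
  case (remove A)
  obtain t0 where t0: "t0 \<in> A" using remove.hyps(2) by blast
  have "blk t0 \<noteq> []" using assms(1) remove.prems(1) t0 unfolding disjoint_blocks_def by blast
  then obtain x xs where xr: "rest = x # xs" using remove.prems(3) t0 by (cases rest) auto
  then obtain t where t: "t \<in> A" "x \<in> set (blk t)" using remove.prems(3)
    by (metis UN_E list.set_intros(1))
  obtain w where w: "w \<in> orientations (blk t)" "sublist w rest" using remove.prems(4) t(1) by blast
  have tU: "t \<in> U" using t(1) remove.prems(1) by blast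
  have setw: "set w = set (blk t)" using disjoint_blocks_orientation(3)[OF assms(1) tU w(1)] .
  obtain b where rb: "rest = w @ b"
    using prefix_if_sublist_through_hd[of x xs w] remove.prems(2) t(2) w(2) xr setw by blast
  have "\<exists>w'\<in>orientations (blk u). sublist w' b" if u: "u \<in> A - {t}" for u
  proof -
    obtain w' where w': "w' \<in> orientations (blk u)" "sublist w' rest" using remove.prems(4) u
      by blast
    have uU: "u \<in> U" using u remove.prems(1) by blast
    have "w' \<noteq> []" using disjoint_blocks_orientation(1)[OF assms(1) uU w'(1)] .
    moreover have "set w' \<inter> set w = {}"
      using disjoint_blocks_orientation(3)[OF assms(1) uU w'(1)] setw
        disjoint_blocks_disjoint[OF assms(1) uU tU] u by simp
    ultimately show ?thesis using sublist_append_disjoint w' rb by metis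
  qed
  moreover have "set b = (\<Union>u\<in>A - {t}. set (blk u))"
  proof -
    have "set b = set rest - set w" using remove.prems(2) rb by auto
    also have "\<dots> = (\<Union>u\<in>A - {t}. set (blk u))"
      using disjoint_blocks_UN_Diff[OF assms(1) remove.prems(1), of "{t}"] remove.prems(3) setw t(1)
      by simp
    finally show ?thesis .
  qed
  moreover have "distinct b" using remove.prems(2) rb by simp
  ultimately obtain ws where ws: "ws \<in> arrangements blk (A - {t})" "b = concat ws"
    using remove.IH[OF t(1), of b] remove.prems(1) by blast
  have "w # ws \<in> arrangements blk A" using Cons_in_arrangements_iff t(1) w(1) ws(1) by blast
  moreover have "rest = concat (w # ws)" using rb ws(2) by simp
  ultimately show ?case by blast
qed

lemma concat_arrangement_if_tour_paths:
  assumes "disjoint_blocks blk U" "finite K" "K \<subseteq> U" "distinct (B @ rest)" "B \<noteq> []"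
    "set rest = (\<Union>t\<in>K. set (blk t))" "\<forall>t\<in>K. path_edges (blk t) \<subseteq> tour_edges (B @ rest)"
  shows "rest \<in> concat ` arrangements blk K"
proof -
  have "\<exists>w\<in>orientations (blk t). sublist w rest" if t: "t \<in> K" for t
  proof -
    have tU: "t \<in> U" using t assms(3) by blast
    have "set (blk t) \<subseteq> set rest" using assms(6) t by auto
    then have "sublist (blk t) rest \<or> sublist (rev (blk t)) rest"
      using tour_path_is_segment[OF assms(4,5)]
        disjoint_blocks_orientation[OF assms(1) tU self_in_orientations]
        assms(7) t by blast
    then show ?thesis by (auto simp: orientations_def)
  qed
  then show ?thesis using concat_arrangement_if_sublists[OF assms(1-3) _ assms(6)] assms(4) by auto
qed

lemma concat_arrangement_inj:
  assumes "disjoint_blocks blk U" "K \<subseteq> U" "K' \<subseteq> U" "ws1 \<in> arrangements blk K"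
    "ws2 \<in> arrangements blk K'"
    "concat ws1 = concat ws2"
  shows "ws1 = ws2"
  using assms(2-6)
proof (induction ws1 arbitrary: K K' ws2)
  case Nil
  show ?case
  proof (cases ws2)
    case Nil then show ?thesis by simp
  next
    case (Cons w ws)
    then obtain t where t: "t \<in> K'" "w \<in> orientations (blk t)" using Nil.prems(4)
      by (auto simp: Cons_in_arrangements_iff)
    have "t \<in> U" using t(1) Nil.prems(2) by auto
    then have "w \<noteq> []" using disjoint_blocks_orientation(1)[OF assms(1) _ t(2)] by simp
    then show ?thesis using Nil.prems(5) Cons by simp
  qed
next
  case (Cons w1 ws1)
  obtain t1 where t1: "t1 \<in> K" "w1 \<in> orientations (blk t1)" "ws1 \<in> arrangements blk (K - {t1})"
    using Cons.prems(3) by (auto simp: Cons_in_arrangements_iff)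
  have t1U: "t1 \<in> U" using t1(1) Cons.prems(1) by auto
  have w1ne: "w1 \<noteq> []" using disjoint_blocks_orientation(1)[OF assms(1) t1U t1(2)] .
  show ?case
  proof (cases ws2)
    case Nil
    then show ?thesis using Cons.prems(5) w1ne by simp
  next
    case (Cons w2 ws2')
    obtain t2 where t2: "t2 \<in> K'" "w2 \<in> orientations (blk t2)" "ws2' \<in> arrangements blk (K' - {t2})"
      using Cons.prems(4) \<open>ws2 = w2 # ws2'\<close> by (auto simp: Cons_in_arrangements_iff)
    have t2U: "t2 \<in> U" using t2(1) Cons.prems(2) by auto
    have w2ne: "w2 \<noteq> []" using disjoint_blocks_orientation(1)[OF assms(1) t2U t2(2)] .
    have eq: "w1 @ concat ws1 = w2 @ concat ws2'" using Cons.prems(5) \<open>ws2 = w2 # ws2'\<close> by simp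
    then have "hd w1 = hd w2" using w1ne w2ne by (metis hd_append2)
    moreover have "hd w1 \<in> set (blk t1)" "hd w2 \<in> set (blk t2)"
      using hd_orientation_in_block[OF assms(1)] t1U t1(2) t2U t2(2) by blast+
    ultimately have "t1 = t2" using disjoint_blocks_unique[OF assms(1) t1U t2U] by metis
    then have "length w1 = length w2" using orientations_D(2) t1(2) t2(2) by metis
    then have "w1 = w2" "concat ws1 = concat ws2'" using eq by auto
    moreover have "K - {t1} \<subseteq> U" "K' - {t2} \<subseteq> U" using Cons.prems(1,2) by auto
    ultimately have "ws1 = ws2'" using Cons.IH[OF _ _ t1(3) t2(3)] by metis
    then show ?thesis using \<open>ws2 = w2 # ws2'\<close> \<open>w1 = w2\<close> by simp
  qed
qed

lemma sum_arrangements_by_first: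
  assumes "disjoint_blocks blk U" "finite K" "K \<subseteq> U" "K \<noteq> {}"
  shows "(\<Sum>ws\<in>arrangements blk K. F ws)
       = (\<Sum>t\<in>K. \<Sum>w\<in>orientations (blk t). \<Sum>ws\<in>arrangements blk (K - {t}). F (w # ws))"
proof -
  define C where
    "C t = (\<lambda>(w, ws). w # ws) ` (orientations (blk t) \<times> arrangements blk (K - {t}))" for t
  have arr: "arrangements blk K = (\<Union>t\<in>K. C t)"
  proof (intro equalityI subsetI)
    fix ws assume ws: "ws \<in> arrangements blk K"
    then obtain w ws' where c: "ws = w # ws'"
      using assms(4) by (cases ws) (auto simp: Nil_in_arrangements_iff)
    then obtain t where "t \<in> K" "w \<in> orientations (blk t)" "ws' \<in> arrangements blk (K - {t})"
      using ws Cons_in_arrangements_iff[of w ws' blk K] by blast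
    then show "ws \<in> (\<Union>t\<in>K. C t)" using c unfolding C_def by blast
  next
    fix ws assume "ws \<in> (\<Union>t\<in>K. C t)"
    then obtain t w ws' where "t \<in> K" "w \<in> orientations (blk t)"
      "ws' \<in> arrangements blk (K - {t})" "ws = w # ws'"
      unfolding C_def by auto
    then show "ws \<in> arrangements blk K" using Cons_in_arrangements_iff[of w ws' blk K] by blast
  qed
  have disj: "C t \<inter> C u = {}" if "t \<in> K" "u \<in> K" "t \<noteq> u" for t u
  proof (rule equals0I)
    fix ws assume "ws \<in> C t \<inter> C u"
    then have "hd ws \<in> orientations (blk t)" "hd ws \<in> orientations (blk u)" by (auto simp: C_def)
    moreover have tu: "t \<in> U" "u \<in> U" using that assms(3) by auto
    ultimately have "hd (hd ws) \<in> set (blk t)" "hd (hd ws) \<in> set (blk u)"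
      using hd_orientation_in_block[OF assms(1)] by blast+
    then show False using disjoint_blocks_unique[OF assms(1) tu] that(3) by blast
  qed
  have "(\<Sum>ws\<in>arrangements blk K. F ws) = (\<Sum>t\<in>K. \<Sum>ws\<in>C t. F ws)"
    unfolding arr
  proof (rule sum.UNION_disjoint)
    show "\<forall>t\<in>K. finite (C t)" by (simp add: C_def finite_orientations finite_arrangements assms(2))
    show "\<forall>t\<in>K. \<forall>u\<in>K. t \<noteq> u \<longrightarrow> C t \<inter> C u = {}" using disj by blast
  qed (rule assms(2))
  also have "\<dots> = (\<Sum>t\<in>K. \<Sum>(w, ws)\<in>orientations (blk t) \<times> arrangements blk (K - {t}). F (w # ws))"
    unfolding C_def
    by (intro sum.cong refl, subst sum.reindex) (auto simp: inj_on_def case_prod_unfold)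
  also have "\<dots> = (\<Sum>t\<in>K. \<Sum>w\<in>orientations (blk t). \<Sum>ws\<in>arrangements blk (K - {t}). F (w # ws))"
    by (simp add: sum.cartesian_product)
  finally show ?thesis .
qed

lemma concat_arrangement_nonempty:
  assumes "disjoint_blocks blk U" "K \<subseteq> U" "K \<noteq> {}" "ws \<in> arrangements blk K"
  shows "concat ws \<noteq> []"
proof -
  obtain t where t: "t \<in> K" using assms(3) by blast
  then have "set (blk t) \<noteq> {}" using assms(1,2) unfolding disjoint_blocks_def by auto
  then have "set (concat ws) \<noteq> {}"
    using set_concat_arrangement[OF assms(4)] t by (metis UN_I ex_in_conv)
  then show ?thesis by (metis list.set(1))
qed

lemma arrangement_covers_block:
  "ws \<in> arrangements blk K \<Longrightarrow> t \<in> K \<Longrightarrow> \<exists>w\<in>set ws. w \<in> orientations (blk t)"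
proof (induction ws arbitrary: K)
  case Nil then show ?case by (simp add: Nil_in_arrangements_iff)
next
  case (Cons w ws)
  then obtain t' where t': "t' \<in> K" "w \<in> orientations (blk t')" "ws \<in> arrangements blk (K - {t'})"
    by (auto simp: Cons_in_arrangements_iff)
  show ?case
  proof (cases "t = t'")
    case True then show ?thesis using t' by auto
  next
    case False then show ?thesis using Cons.IH[OF t'(3)] Cons.prems(2) by auto
  qed
qed

lemma path_edges_concat_arrangement:
  assumes "ws \<in> arrangements blk K" "t \<in> K"
  shows "path_edges (blk t) \<subseteq> path_edges (concat ws)"
proof -
  obtain w where "w \<in> set ws" "w \<in> orientations (blk t)"
    using arrangement_covers_block[OF assms] by blast
  then show ?thesis using path_edges_concat orientations_D(5) by metis
qed

section \<open>Averaging over arrangements\<close>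

fun chain_len :: "('a \<Rightarrow> 'a \<Rightarrow> real) \<Rightarrow> 'a \<Rightarrow> 'a list list \<Rightarrow> 'a \<Rightarrow> real" where
  "chain_len d x [] y = d x y"
| "chain_len d x (w # ws) y = d x (hd w) + path_len d w + chain_len d (last w) ws y"

lemma path_len_append_chain_len:
  assumes "c \<noteq> []" "\<forall>w\<in>set ws. w \<noteq> []"
  shows "path_len d (c @ concat ws) + d (last (c @ concat ws)) y
       = path_len d c + chain_len d (last c) ws y"
  using assms
proof (induction ws arbitrary: c)
  case (Cons w ws)
  have "path_len d ((c @ w) @ concat ws) + d (last ((c @ w) @ concat ws)) y
      = path_len d (c @ w) + chain_len d (last (c @ w)) ws y"
    using Cons.IH[of "c @ w"] Cons.prems by simp
  then show ?case using Cons.prems by (simp add: path_len_append)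
qed simp

definition mu_avg :: "'a list \<Rightarrow> ('a \<Rightarrow> real) \<Rightarrow> real" where
  "mu_avg B f = (\<Sum>i\<in>set B. mu_block B i * f i)"

lemma mu_avg_singleton: "mu_avg [x] f = f x"
  by (simp add: mu_avg_def mu_block_def)

lemma mu_avg_conv_ends:
  assumes "distinct B" "length B \<ge> 2"
  shows "mu_avg B f = (f (hd B) + f (last B)) / 2"
proof -
  have ne: "B \<noteq> []" using assms(2) by auto
  then have hl: "hd B \<noteq> last B" using distinct_hd_eq_last_iff[OF assms(1)] assms(2) by simp
  have "mu_avg B f = (\<Sum>i\<in>set B. if i \<in> {hd B, last B} then f i / 2 else 0)"
    unfolding mu_avg_def mu_block_def using assms(2) by (intro sum.cong) auto
  also have "\<dots> = (\<Sum>i\<in>{hd B, last B}. f i / 2)"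
  proof -
    have "set B \<inter> {i. i = hd B \<or> i = last B} = {hd B, last B}" using ne by auto
    then show ?thesis by (simp add: sum.If_cases)
  qed
  also have "\<dots> = (f (hd B) + f (last B)) / 2"
    using hl by (simp add: add_divide_distrib)
  finally show ?thesis .
qed

lemma sum_orientations_ends:
  assumes "B \<noteq> []" "distinct B"
  shows "(\<Sum>w\<in>orientations B. f (hd w)) = real (card (orientations B)) * mu_avg B f"
    and "(\<Sum>w\<in>orientations B. f (last w)) = real (card (orientations B)) * mu_avg B f"
proof -
  have "(\<Sum>w\<in>orientations B. f (hd w)) = real (card (orientations B)) * mu_avg B f
      \<and> (\<Sum>w\<in>orientations B. f (last w)) = real (card (orientations B)) * mu_avg B f"
  proof (cases "length B = 1")
    case True
    then obtain x where "B = [x]" by (cases B) (auto simp: length_Suc_conv)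
    then show ?thesis by (simp add: orientations_def mu_avg_singleton)
  next
    case False
    moreover have "length B \<noteq> 0" using assms(1) by simp
    ultimately have l: "length B \<ge> 2" by linarith
    then have "B \<noteq> rev B"
      using distinct_hd_eq_last_iff[OF assms(2,1)] False by (metis hd_rev)
    then show ?thesis
      using assms(1) by (simp add: orientations_def mu_avg_conv_ends[OF assms(2) l] hd_rev last_rev)
  qed
  then show "(\<Sum>w\<in>orientations B. f (hd w)) = real (card (orientations B)) * mu_avg B f"
    and "(\<Sum>w\<in>orientations B. f (last w)) = real (card (orientations B)) * mu_avg B f"
    by auto
qed

lemma mu_avg_one: "B \<noteq> [] \<Longrightarrow> distinct B \<Longrightarrow> mu_avg B (\<lambda>_. 1) = 1"
  using sum_orientations_ends(1)[of B "\<lambda>_. 1"] self_in_orientations[of B] finite_orientations[of B]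
  by (simp add: card_gt_0_iff) blast

lemma mu_avg_add_const: "B \<noteq> [] \<Longrightarrow> distinct B \<Longrightarrow> mu_avg B (\<lambda>z. f z + c) = mu_avg B f + c"
  using mu_avg_one[of B]
  by (simp add: mu_avg_def sum.distrib distrib_left sum_distrib_right[symmetric])

lemma card_arrangements:
  assumes "disjoint_blocks blk U" "finite K" "K \<subseteq> U"
  shows "real (card (arrangements blk K))
       = fact (card K) * (\<Prod>t\<in>K. real (card (orientations (blk t))))"
  using assms(2,3)
proof (induction K rule: finite_remove_induct)
  case empty then show ?case by (simp add: arrangements_empty)
next
  case (remove A)
  define P where "P = (\<Prod>t\<in>A. real (card (orientations (blk t))))"
  have "real (card (arrangements blk A)) = (\<Sum>ws\<in>arrangements blk A. 1)" by simp
  also have "\<dots> = (\<Sum>t\<in>A. \<Sum>w\<in>orientations (blk t). \<Sum>ws\<in>arrangements blk (A - {t}). 1)"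
    by (rule sum_arrangements_by_first[OF assms(1) remove.hyps(1) remove.prems remove.hyps(2)])
  also have "\<dots> = (\<Sum>t\<in>A. fact (card A - 1) * P)"
  proof (intro sum.cong refl)
    fix t assume t: "t \<in> A"
    have "real (card (arrangements blk (A - {t})))
        = fact (card (A - {t})) * (\<Prod>u\<in>A - {t}. real (card (orientations (blk u))))"
      using remove.IH[OF t] remove.prems by auto
    moreover have
      "real (card (orientations (blk t))) * (\<Prod>u\<in>A - {t}. real (card (orientations (blk u)))) = P"
      unfolding P_def using remove.hyps(1) t by (simp add: prod.remove)
    ultimately show
      "(\<Sum>w\<in>orientations (blk t). \<Sum>ws\<in>arrangements blk (A - {t}). 1) = fact (card A - 1) * P"
      using remove.hyps(1) t by (simp add: card_Diff_singleton algebra_simps)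
  qed
  also have "\<dots> = fact (card A) * P"
    using remove.hyps(1,2) by (simp add: fact_reduce[of "card A"] card_gt_0_iff)
  finally show ?case by (simp add: P_def)
qed

lemma card_arrangements_Diff_singleton:
  assumes "disjoint_blocks blk U" "finite K" "K \<subseteq> U" "t \<in> K"
  shows "real (card (orientations (blk t))) * real (card (arrangements blk (K - {t})))
       = real (card (arrangements blk K)) / real (card K)"
proof -
  have pos: "card K > 0" using assms(2,4) card_gt_0_iff by blast
  have "real (card (arrangements blk (K - {t})))
      = fact (card K - 1) * (\<Prod>u\<in>K - {t}. real (card (orientations (blk u))))"
    using card_arrangements[OF assms(1), of "K - {t}"] assms(2-4)
    by (auto simp: card_Diff_singleton)
  moreover have "(\<Prod>u\<in>K. real (card (orientations (blk u))))
      = real (card (orientations (blk t))) * (\<Prod>u\<in>K - {t}. real (card (orientations (blk u))))"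
    using assms(2,4) by (simp add: prod.remove)
  moreover have "fact (card K) = real (card K) * fact (card K - 1)"
    using pos by (simp add: fact_reduce[of "card K"])
  ultimately show ?thesis
    using card_arrangements[OF assms(1-3)] pos by (simp add: field_simps)
qed

lemma sum_sum_Diff_singleton:
  assumes "finite K"
  shows "(\<Sum>t\<in>K. \<Sum>u\<in>K - {t}. f u) = (real (card K) - 1) * (\<Sum>u\<in>K. f u :: real)"
proof -
  have "(\<Sum>t\<in>K. \<Sum>u\<in>K - {t}. f u) = (\<Sum>t\<in>K. (\<Sum>u\<in>K. f u) - f t)"
    using assms by (intro sum.cong refl) (simp add: sum_diff1)
  then show ?thesis by (simp add: sum_subtractf algebra_simps)
qed

lemma sum_pairs_Diff_singleton:
  assumes "finite A" "\<And>u v. f u v = f v u"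
  shows "(\<Sum>t\<in>A. \<Sum>u\<in>A - {t}. \<Sum>v\<in>A - {t} - {u}. f u v)
       = (real (card A) - 2) * (\<Sum>u\<in>A. \<Sum>v\<in>A - {u}. f u v :: real)"
proof -
  define R where "R u = (\<Sum>v\<in>A - {u}. f u v)" for u
  have "(\<Sum>v\<in>A - {t} - {u}. f u v) = R u - f t u" if "t \<in> A" "u \<in> A - {t}" for t u
  proof -
    have "A - {t} - {u} = (A - {u}) - {t}" "t \<in> A - {u}" using that by auto
    then show ?thesis using assms by (simp add: R_def sum_diff1)
  qed
  then have "(\<Sum>t\<in>A. \<Sum>u\<in>A - {t}. \<Sum>v\<in>A - {t} - {u}. f u v)
      = (\<Sum>t\<in>A. \<Sum>u\<in>A - {t}. R u) - (\<Sum>t\<in>A. \<Sum>u\<in>A - {t}. f t u)"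
    by (simp add: sum_subtractf)
  also have "(\<Sum>t\<in>A. \<Sum>u\<in>A - {t}. R u) = (real (card A) - 1) * (\<Sum>u\<in>A. R u)"
    using sum_sum_Diff_singleton[OF assms(1)] .
  finally show ?thesis by (simp add: R_def algebra_simps)
qed

definition end_dist :: "('a \<Rightarrow> 'a \<Rightarrow> real) \<Rightarrow> 'a list \<Rightarrow> 'a \<Rightarrow> real" where
  "end_dist d B x = mu_avg B (d x)"

definition ends_dist :: "('a \<Rightarrow> 'a \<Rightarrow> real) \<Rightarrow> 'a list \<Rightarrow> 'a list \<Rightarrow> real" where
  "ends_dist d B B' = mu_avg B (\<lambda>i. mu_avg B' (d i))"

definition inner_len :: "('a \<Rightarrow> 'a \<Rightarrow> real) \<Rightarrow> ('i \<Rightarrow> 'a list) \<Rightarrow> 'i set \<Rightarrow> real" where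
  "inner_len d blk K = (\<Sum>t\<in>K. path_len d (blk t))"

definition ends_dist_sum :: "('a \<Rightarrow> 'a \<Rightarrow> real) \<Rightarrow> ('i \<Rightarrow> 'a list) \<Rightarrow> 'i set \<Rightarrow> real" where
  "ends_dist_sum d blk K = (\<Sum>t\<in>K. \<Sum>u\<in>K - {t}. ends_dist d (blk t) (blk u))"

text \<open>The mean total length of the links of a chain from \<open>x\<close> to \<open>y\<close> through a uniformly
  random arrangement of the blocks \<open>K\<close>.\<close>

definition link_avg :: "('a \<Rightarrow> 'a \<Rightarrow> real) \<Rightarrow> ('i \<Rightarrow> 'a list) \<Rightarrow> 'i set \<Rightarrow> 'a \<Rightarrow> 'a \<Rightarrow> real" where
  "link_avg d blk K x y = (if K = {} then d x y
     else ((\<Sum>t\<in>K. end_dist d (blk t) x + end_dist d (blk t) y) + ends_dist_sum d blk K)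
       / real (card K))"

lemma ends_dist_sym: "sym_fun d \<Longrightarrow> ends_dist d B B' = ends_dist d B' B"
  unfolding ends_dist_def mu_avg_def sym_fun_def
  by (simp add: sum_distrib_left sum.swap[of _ "set B"] algebra_simps)

lemma mu_avg_link_avg:
  assumes "B \<noteq> []" "distinct B" "K \<noteq> {}"
  shows "mu_avg B (\<lambda>z. link_avg d blk K z y)
     = ((\<Sum>u\<in>K. ends_dist d B (blk u) + end_dist d (blk u) y) + ends_dist_sum d blk K)
       / real (card K)"
proof -
  have "mu_avg B (\<lambda>z. link_avg d blk K z y)
      = ((\<Sum>u\<in>K. mu_avg B (\<lambda>z. end_dist d (blk u) z + end_dist d (blk u) y))
         + ends_dist_sum d blk K * mu_avg B (\<lambda>_. 1)) / real (card K)"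
    using assms(3)
    by (simp add: link_avg_def mu_avg_def sum.distrib sum_distrib_left sum_divide_distrib[symmetric]
        sum.swap[of _ "set B"] add_divide_distrib algebra_simps)
  moreover have "mu_avg B (\<lambda>z. end_dist d (blk u) z + end_dist d (blk u) y)
      = ends_dist d B (blk u) + end_dist d (blk u) y" for u
    using mu_avg_add_const[OF assms(1,2)] by (simp add: ends_dist_def end_dist_def)
  ultimately show ?thesis using mu_avg_one[OF assms(1,2)] by simp
qed

lemma link_avg_first_block:
  assumes "disjoint_blocks blk U" "sym_fun d" "finite A" "A \<subseteq> U" "A \<noteq> {}"
  shows "(\<Sum>t\<in>A. end_dist d (blk t) x + mu_avg (blk t) (\<lambda>z. link_avg d blk (A - {t}) z y))
       = real (card A) * link_avg d blk A x y"
proof (cases "card A = 1")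
  case True
  then obtain t where "A = {t}" by (auto simp: card_Suc_eq)
  moreover have "mu_avg (blk t) (\<lambda>z. d z y) = end_dist d (blk t) y"
    using assms(2) unfolding end_dist_def sym_fun_def by metis
  ultimately show ?thesis by (simp add: link_avg_def ends_dist_sum_def)
next
  case False
  define M where "M = real (card A)"
  have "card A \<noteq> 0" using assms(3,5) by simp
  then have M2: "card A \<ge> 2" using False by linarith
  have blk: "blk t \<noteq> []" "distinct (blk t)" if "t \<in> A" for t
    using assms(1,4) that unfolding disjoint_blocks_def by auto
  have card_rem: "real (card (A - {t})) = M - 1" if "t \<in> A" for t
    using that assms(3) M2 by (simp add: M_def card_Diff_singleton of_nat_diff)
  have rem_ne: "A - {t} \<noteq> {}" for t
    using card_mono[of "{t}" A] M2 by fastforce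
  have "(\<Sum>t\<in>A. end_dist d (blk t) x + mu_avg (blk t) (\<lambda>z. link_avg d blk (A - {t}) z y))
      = (\<Sum>t\<in>A. end_dist d (blk t) x)
        + ((\<Sum>t\<in>A. \<Sum>u\<in>A - {t}. ends_dist d (blk t) (blk u))
           + (\<Sum>t\<in>A. \<Sum>u\<in>A - {t}. end_dist d (blk u) y)
           + (\<Sum>t\<in>A. ends_dist_sum d blk (A - {t}))) / (M - 1)"
    using mu_avg_link_avg[OF blk rem_ne] card_rem
    by (simp add: sum.distrib sum_divide_distrib[symmetric] add_divide_distrib)
  also have "(\<Sum>t\<in>A. \<Sum>u\<in>A - {t}. end_dist d (blk u) y) = (M - 1) * (\<Sum>u\<in>A. end_dist d (blk u) y)"
    unfolding M_def by (rule sum_sum_Diff_singleton[OF assms(3)])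
  also have "(\<Sum>t\<in>A. ends_dist_sum d blk (A - {t})) = (M - 2) * ends_dist_sum d blk A"
    using sum_pairs_Diff_singleton[OF assms(3), of "\<lambda>u v. ends_dist d (blk u) (blk v)"]
      ends_dist_sym[OF assms(2)] by (simp add: ends_dist_sum_def M_def)
  also have "(\<Sum>t\<in>A. \<Sum>u\<in>A - {t}. ends_dist d (blk t) (blk u)) = ends_dist_sum d blk A"
    by (simp add: ends_dist_sum_def)
  also have "(\<Sum>t\<in>A. end_dist d (blk t) x) + (ends_dist_sum d blk A
      + (M - 1) * (\<Sum>u\<in>A. end_dist d (blk u) y) + (M - 2) * ends_dist_sum d blk A) / (M - 1)
      = (\<Sum>t\<in>A. end_dist d (blk t) x) + (\<Sum>u\<in>A. end_dist d (blk u) y) + ends_dist_sum d blk A"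
    using M2 by (simp add: M_def field_simps)
  also have "\<dots> = M * link_avg d blk A x y"
    using assms(5) M2 by (simp add: link_avg_def sum.distrib M_def)
  finally show ?thesis by (simp add: M_def)
qed

lemma sum_chain_len_arrangements:
  assumes "disjoint_blocks blk U" "sym_fun d" "finite K" "K \<subseteq> U"
  shows "(\<Sum>ws\<in>arrangements blk K. chain_len d x ws y)
       = real (card (arrangements blk K)) * (inner_len d blk K + link_avg d blk K x y)"
  using assms(3,4)
proof (induction K arbitrary: x rule: finite_remove_induct)
  case empty then show ?case by (simp add: arrangements_empty inner_len_def link_avg_def)
next
  case (remove A)
  define N where "N = real (card (arrangements blk A))"
  define M where "M = real (card A)"
  have M: "M > 0" using remove.hyps(1,2) by (simp add: M_def card_gt_0_iff)
  have blk: "blk t \<noteq> []" "distinct (blk t)" if "t \<in> A" for t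
    using assms(1) remove.prems that unfolding disjoint_blocks_def by auto
  have first: "(\<Sum>w\<in>orientations (blk t). \<Sum>ws\<in>arrangements blk (A - {t}). chain_len d x (w # ws) y)
      = N / M * (path_len d (blk t) + inner_len d blk (A - {t})
                 + end_dist d (blk t) x + mu_avg (blk t) (\<lambda>z. link_avg d blk (A - {t}) z y))"
    if t: "t \<in> A" for t
  proof -
    define Nt where "Nt = real (card (arrangements blk (A - {t})))"
    define ct where "ct = real (card (orientations (blk t)))"
    have "(\<Sum>w\<in>orientations (blk t). \<Sum>ws\<in>arrangements blk (A - {t}). chain_len d x (w # ws) y)
        = (\<Sum>w\<in>orientations (blk t). Nt * (d x (hd w) + path_len d (blk t)
             + inner_len d blk (A - {t}) + link_avg d blk (A - {t}) (last w) y))"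
      using remove.IH[OF t] remove.prems orientations_D(6)[OF _ assms(2)]
      by (intro sum.cong refl) (auto simp: sum.distrib Nt_def algebra_simps)
    also have "\<dots> = Nt * ct * (path_len d (blk t) + inner_len d blk (A - {t})
        + end_dist d (blk t) x + mu_avg (blk t) (\<lambda>z. link_avg d blk (A - {t}) z y))"
      using sum_orientations_ends[OF blk[OF t], of "d x"]
        sum_orientations_ends[OF blk[OF t], of "\<lambda>z. link_avg d blk (A - {t}) z y"]
      by (simp add: sum.distrib sum_distrib_left[symmetric] end_dist_def ct_def algebra_simps)
    finally show ?thesis
      using card_arrangements_Diff_singleton[OF assms(1) remove.hyps(1) remove.prems t]
      by (simp add: N_def M_def Nt_def ct_def algebra_simps)
  qed
  have inner: "(\<Sum>t\<in>A. path_len d (blk t) + inner_len d blk (A - {t})) = M * inner_len d blk A"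
    using remove.hyps(1) by (simp add: inner_len_def sum_diff1 M_def)
  have "(\<Sum>ws\<in>arrangements blk A. chain_len d x ws y)
      = (\<Sum>t\<in>A. \<Sum>w\<in>orientations (blk t). \<Sum>ws\<in>arrangements blk (A - {t}). chain_len d x (w # ws) y)"
    by (rule sum_arrangements_by_first[OF assms(1) remove.hyps(1) remove.prems remove.hyps(2)])
  also have "\<dots> = (\<Sum>t\<in>A. N / M * (path_len d (blk t) + inner_len d blk (A - {t})
      + end_dist d (blk t) x + mu_avg (blk t) (\<lambda>z. link_avg d blk (A - {t}) z y)))"
    by (rule sum.cong[OF refl first])
  also have "\<dots> = N / M * ((\<Sum>t\<in>A. path_len d (blk t) + inner_len d blk (A - {t}))
      + (\<Sum>t\<in>A. end_dist d (blk t) x + mu_avg (blk t) (\<lambda>z. link_avg d blk (A - {t}) z y)))"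
    by (simp add: sum.distrib sum_distrib_left[symmetric] sum_divide_distrib[symmetric] add.assoc)
  also have "\<dots> = N * (inner_len d blk A + link_avg d blk A x y)"
    using M
    unfolding inner link_avg_first_block[OF assms(1,2) remove.hyps(1) remove.prems remove.hyps(2)]
    by (simp add: M_def field_simps)
  finally show ?case by (simp add: N_def)
qed

section \<open>Orderings consistent with a join\<close>

lemma distinct_concat_nth_disjoint:
  "distinct (concat Cs) \<Longrightarrow> t < length Cs \<Longrightarrow> u < length Cs \<Longrightarrow> t \<noteq> u
   \<Longrightarrow> set (Cs ! t) \<inter> set (Cs ! u) = {}"
proof (induction Cs arbitrary: t u)
  case Nil then show ?case by simp
next
  case (Cons B Cs)
  have d: "distinct (concat Cs)" "set B \<inter> set (concat Cs) = {}" using Cons.prems(1) by auto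
  show ?case
  proof (cases t)
    case 0
    then obtain u' where u: "u = Suc u'" using Cons.prems(4) by (cases u) auto
    have "Cs ! u' \<in> set Cs" using Cons.prems(3) u by simp
    then have "set (Cs ! u') \<subseteq> set (concat Cs)" by auto
    then show ?thesis using d(2) 0 u by auto
  next
    case (Suc t')
    show ?thesis
    proof (cases u)
      case 0
      have "Cs ! t' \<in> set Cs" using Cons.prems(2) \<open>t = Suc t'\<close> by simp
      then have "set (Cs ! t') \<subseteq> set (concat Cs)" by auto
      then show ?thesis using d(2) 0 Suc by auto
    next
      case (Suc u')
      then show ?thesis using Cons.IH[OF d(1), of t' u'] Cons.prems \<open>t = Suc t'\<close> by simp
    qed
  qed
qed

lemma partial_circ_disjoint_blocks:
  assumes "partial_circ X Cs"
  shows "disjoint_blocks (nth Cs) {0..<length Cs}"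
proof -
  have "distinct (concat Cs)" using assms by (simp add: partial_circ_def)
  then have "\<forall>t\<in>{0..<length Cs}. Cs ! t \<noteq> [] \<and> distinct (Cs ! t)"
    using assms unfolding partial_circ_def by (auto simp: distinct_concat_iff)
  moreover have "\<forall>t\<in>{0..<length Cs}. \<forall>u\<in>{0..<length Cs}. t \<noteq> u \<longrightarrow> set (Cs ! t) \<inter> set (Cs ! u) = {}"
  proof (intro ballI impI)
    fix t u assume "t \<in> {0..<length Cs}" "u \<in> {0..<length Cs}" "t \<noteq> u"
    then show "set (Cs ! t) \<inter> set (Cs ! u) = {}"
      using distinct_concat_nth_disjoint[OF \<open>distinct (concat Cs)\<close>] by auto
  qed
  ultimately show ?thesis unfolding disjoint_blocks_def by blast
qed

lemma partial_circ_UN_blocks: "partial_circ X Cs \<Longrightarrow> (\<Union>t\<in>{0..<length Cs}. set (Cs ! t)) = X"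
proof -
  assume a: "partial_circ X Cs"
  have "set Cs = (!) Cs ` {0..<length Cs}" by (metis map_nth set_map set_upt)
  then have "set (concat Cs) = (\<Union>t\<in>{0..<length Cs}. set (Cs ! t))" by (simp add: image_image)
  then show ?thesis using a by (simp add: partial_circ_def)
qed

lemma consistent_path_edges:
  assumes "ys \<noteq> []" "\<forall>i j. consec B i j \<longrightarrow> cyc_adj ys i j"
  shows "path_edges B \<subseteq> tour_edges ys"
proof
  fix e assume "e \<in> path_edges B"
  then obtain k where k: "e = {B ! k, B ! (k + 1)}" "k + 1 < length B"
    by (auto simp: path_edges_conv_nth)
  then have "consec B (B ! k) (B ! (k + 1))" by (auto simp: consec_def)
  then have "cyc_adj ys (B ! k) (B ! (k + 1))" using assms(2) by blast
  then show "e \<in> tour_edges ys" using cyc_adj_iff_tour_edge[OF assms(1)] k(1) by simp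
qed

lemma mu_eq_mu_block:
  assumes "partial_circ X Cs" "t < length Cs" "i \<in> set (Cs ! t)"
  shows "mu Cs i = mu_block (Cs ! t) i"
proof -
  have dis: "distinct (concat Cs)" using assms(1) by (simp add: partial_circ_def)
  have "mu Cs i = (\<Sum>k\<in>{0..<length Cs}. mu_block (Cs ! k) i)"
    unfolding mu_def by (simp add: sum_list_sum_nth)
  also have "\<dots> = mu_block (Cs ! t) i + (\<Sum>k\<in>{0..<length Cs} - {t}. mu_block (Cs ! k) i)"
    using assms(2) by (simp add: sum.remove)
  also have "(\<Sum>k\<in>{0..<length Cs} - {t}. mu_block (Cs ! k) i) = 0"
  proof (intro sum.neutral ballI)
    fix k assume k: "k \<in> {0..<length Cs} - {t}"
    then have "set (Cs ! t) \<inter> set (Cs ! k) = {}" using distinct_concat_nth_disjoint[OF dis assms(2)]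
      by auto
    then have "i \<notin> set (Cs ! k)" using assms(3) by auto
    then show "mu_block (Cs ! k) i = 0" by (simp add: mu_block_def)
  qed
  finally show ?thesis by simp
qed

definition join_list :: "'a list \<times> 'a list \<times> 'a list list \<Rightarrow> 'a list" where
  "join_list p = (case p of (a, b, ws) \<Rightarrow> a @ b @ concat ws)"

definition join_choices :: "'a list list \<Rightarrow> nat \<Rightarrow> nat \<Rightarrow> ('a list \<times> 'a list \<times> 'a list list) set" where
  "join_choices Cs r s = orientations (Cs ! r) \<times> orientations (Cs ! s)
     \<times> arrangements (nth Cs) ({0..<length Cs} - {r} - {s})"

lemma other_blocks_props:
  assumes "length Cs \<ge> 3" "r < length Cs" "s < length Cs" "r \<noteq> s"
  shows "{0..<length Cs} - {r} - {s} \<noteq> {}" "finite ({0..<length Cs} - {r} - {s})"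
    "real (card ({0..<length Cs} - {r} - {s})) = real (length Cs) - 2"
proof -
  have c: "card ({0..<length Cs} - {r} - {s}) = length Cs - 2"
    using assms by (simp add: card_Diff_singleton)
  then show "real (card ({0..<length Cs} - {r} - {s})) = real (length Cs) - 2"
    using assms(1) by (simp add: of_nat_diff)
  have "length Cs - 2 \<noteq> 0" using assms(1) by simp
  then show "{0..<length Cs} - {r} - {s} \<noteq> {}" using c by (metis card.empty)
  show "finite ({0..<length Cs} - {r} - {s})" by simp
qed

lemma join_choice_arrangement:
  assumes "r < length Cs" "s < length Cs" "r \<noteq> s" "(a, b, ws) \<in> join_choices Cs r s"
  shows "a # b # ws \<in> arrangements (nth Cs) {0..<length Cs}"
proof -
  have "b # ws \<in> arrangements (nth Cs) ({0..<length Cs} - {r})"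
    using assms by (subst Cons_in_arrangements_iff) (auto simp: join_choices_def)
  then show ?thesis using assms by (subst Cons_in_arrangements_iff) (auto simp: join_choices_def)
qed

lemma join_list_props:
  assumes pc: "partial_circ X Cs" and "r < length Cs" "s < length Cs" "r \<noteq> s"
    "p \<in> join_choices Cs r s"
  shows "distinct (join_list p)" "set (join_list p) = X" "join_list p \<noteq> []"
proof -
  obtain a b ws where p: "p = (a, b, ws)" by (cases p) auto
  have A: "a # b # ws \<in> arrangements (nth Cs) {0..<length Cs}" using join_choice_arrangement assms p
    by blast
  have join_list: "join_list p = concat (a # b # ws)" by (simp add: join_list_def p)
  show "distinct (join_list p)"
    using distinct_concat_arrangement[OF partial_circ_disjoint_blocks[OF pc] _ A] join_list by simp
  show "set (join_list p) = X"
    using set_concat_arrangement[OF A] partial_circ_UN_blocks[OF pc] join_list by simp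
  have "a \<in> orientations (Cs ! r)" using assms(5) p by (simp add: join_choices_def)
  then have "a \<noteq> []"
    using disjoint_blocks_orientation(1)[OF partial_circ_disjoint_blocks[OF pc], of r a] assms(2)
    by simp
  then show "join_list p \<noteq> []" by (simp add: join_list_def p)
qed

lemma join_class_in_o_join:
  assumes pc: "partial_circ X Cs" and "r < length Cs" "s < length Cs" "r \<noteq> s"
    "p \<in> join_choices Cs r s"
  shows "circ_class (join_list p) \<in> o_join X Cs r s"
proof -
  obtain a b ws where p: "p = (a, b, ws)" by (cases p) auto
  have ab: "a \<in> orientations (Cs ! r)" "b \<in> orientations (Cs ! s)"
    "ws \<in> arrangements (nth Cs) ({0..<length Cs} - {r} - {s})"
    using assms(5) p by (auto simp: join_choices_def)
  have pr: "distinct (join_list p)" "set (join_list p) = X" "join_list p \<noteq> []"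
    using join_list_props[OF assms] by auto
  have co: "circ_class (join_list p) \<in> circ_orderings X" unfolding circ_orderings_def using pr
    by blast
  define P where "P = (a @ b) # [Cs ! t. t \<leftarrow> [0..<length Cs], t \<noteq> r, t \<noteq> s]"
  have PJ: "P \<in> join_set Cs r s"
    unfolding join_set_def P_def using ab(1,2) by (auto simp: orientations_def)
  have "\<forall>B\<in>set P. \<forall>i j. consec B i j \<longrightarrow> cyc_adj (join_list p) i j"
  proof (intro ballI allI impI)
    fix B i j assume B: "B \<in> set P" and c: "consec B i j"
    have "path_edges B \<subseteq> path_edges (join_list p)"
    proof (cases "B = a @ b")
      case True
      then show ?thesis
        using path_edges_append_mono(1)[of "a @ b" "concat ws"] by (simp add: join_list_def p)
    next
      case False
      then obtain t where "t \<in> {0..<length Cs} - {r} - {s}" "B = Cs ! t" using B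
        by (auto simp: P_def)
      then have "path_edges B \<subseteq> path_edges (concat ws)"
        using path_edges_concat_arrangement[OF ab(3)] by simp
      then show ?thesis
        using path_edges_append_mono(2)[of "concat ws" "a @ b"] by (simp add: join_list_def p)
    qed
    then have "{i, j} \<in> tour_edges (join_list p)" using consec_imp_path_edge[OF c]
      by (auto simp: tour_edges_def)
    then show "cyc_adj (join_list p) i j" using cyc_adj_iff_tour_edge[OF pr(3)] by simp
  qed
  then have "consistent (circ_class (join_list p)) P" unfolding consistent_def using circ_class_refl
    by blast
  then show ?thesis unfolding o_join_def using co PJ by blast
qed

lemma o_join_D:
  assumes pc: "partial_circ X Cs" and r: "r < length Cs" and c: "c \<in> o_join X Cs r s"
  obtains a b ys where "a \<in> orientations (Cs ! r)" "b \<in> orientations (Cs ! s)"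
    "c = circ_class ys" "distinct ys" "set ys = X" "path_edges (a @ b) \<subseteq> tour_edges ys"
    "\<forall>t\<in>{0..<length Cs} - {r} - {s}. path_edges (Cs ! t) \<subseteq> tour_edges ys"
proof -
  obtain P where P: "P \<in> join_set Cs r s" "consistent c P" using c unfolding o_join_def by blast
  obtain a b where ab: "a \<in> orientations (Cs ! r)" "b \<in> orientations (Cs ! s)"
    "P = (a @ b) # [Cs ! t. t \<leftarrow> [0..<length Cs], t \<noteq> r, t \<noteq> s]"
    using P(1) unfolding join_set_def orientations_def by blast
  obtain ys where ys: "ys \<in> c" "\<forall>B\<in>set P. \<forall>i j. consec B i j \<longrightarrow> cyc_adj ys i j"
    using P(2) unfolding consistent_def by blast
  obtain ys0 where "c = circ_class ys0" "distinct ys0" "set ys0 = X"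
    using c unfolding o_join_def circ_orderings_def by blast
  then have cys: "c = circ_class ys" "distinct ys" "set ys = X"
    using circ_class_eq[OF ys(1)[unfolded \<open>c = circ_class ys0\<close>]] circ_class_D[of ys ys0] ys(1)
    by auto
  have "Cs ! r \<noteq> []"
    using partial_circ_disjoint_blocks[OF pc] r unfolding disjoint_blocks_def by auto
  then have "ys \<noteq> []" using cys(3) partial_circ_UN_blocks[OF pc] r by force
  then have "path_edges B \<subseteq> tour_edges ys" if "B \<in> set P" for B
    using consistent_path_edges ys(2) that by blast
  then show ?thesis using that[OF ab(1,2) cys] ab(3) by auto
qed

lemma o_join_from_join_choice:
  assumes pc: "partial_circ X Cs" and m3: "length Cs \<ge> 3"
    and rs: "r < length Cs" "s < length Cs" "r \<noteq> s" and c: "c \<in> o_join X Cs r s"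
  shows "\<exists>p\<in>join_choices Cs r s. c = circ_class (join_list p)"
proof -
  define U where "U = {0..<length Cs}"
  define K0 where "K0 = U - {r} - {s}"
  have wf: "disjoint_blocks (nth Cs) U"
    using partial_circ_disjoint_blocks[OF pc] by (simp add: U_def)
  have K0: "K0 \<noteq> {}" "finite K0" "K0 \<subseteq> U"
    using other_blocks_props[OF m3 rs] by (auto simp: K0_def U_def)
  have rU: "r \<in> U" "s \<in> U" using rs by (auto simp: U_def)
  have XU: "X = (\<Union>t\<in>U. set (Cs ! t))" using partial_circ_UN_blocks[OF pc] by (simp add: U_def)
  obtain a b ys where ab: "a \<in> orientations (Cs ! r)" "b \<in> orientations (Cs ! s)"
    and cys: "c = circ_class ys" "distinct ys" "set ys = X"
    and edges: "path_edges (a @ b) \<subseteq> tour_edges ys" "\<forall>t\<in>K0. path_edges (Cs ! t) \<subseteq> tour_edges ys"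
    using o_join_D[OF pc rs(1) c] by (auto simp: K0_def U_def)
  have a_b: "a \<noteq> []" "distinct a" "set a = set (Cs ! r)"
    "b \<noteq> []" "distinct b" "set b = set (Cs ! s)"
    using disjoint_blocks_orientation[OF wf rU(1) ab(1)]
      disjoint_blocks_orientation[OF wf rU(2) ab(2)] by auto
  have dab: "distinct (a @ b)" using a_b disjoint_blocks_disjoint[OF wf rU rs(3)] by auto
  have setab: "set (a @ b) = (\<Union>t\<in>{r, s}. set (Cs ! t))" using a_b by auto
  have rest_set: "X - set (a @ b) = (\<Union>t\<in>K0. set (Cs ! t))"
    unfolding XU setab using disjoint_blocks_UN_Diff[OF wf subset_refl, of "{r, s}"] rU
    by (simp add: K0_def Diff_insert2[symmetric])
  obtain t0 where t0: "t0 \<in> K0" using K0(1) by blast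
  have "Cs ! t0 \<noteq> []" using wf t0 K0(3) unfolding disjoint_blocks_def by blast
  then have "set (a @ b) \<subset> set ys" using rest_set t0 cys(3) setab XU rU by auto
  then have "length (a @ b) < length ys" "set (a @ b) \<subseteq> set ys"
    using psubset_card_mono[of "set ys" "set (a @ b)"] distinct_card[OF cys(2)]
      distinct_card[OF dab] by auto
  then obtain zs rest where zs: "zs \<in> circ_class ys" "zs = (a @ b) @ rest"
    using circ_class_path_prefix[OF cys(2) _ dab _ _ edges(1)] a_b(1) by auto
  have zsp: "distinct zs" "set zs = X" "tour_edges zs = tour_edges ys"
    using circ_class_D[OF zs(1)] cys by auto
  have set_rest: "set rest = (\<Union>t\<in>K0. set (Cs ! t))"
    using zsp(1,2) zs(2) rest_set by auto
  have "\<forall>t\<in>K0. path_edges (Cs ! t) \<subseteq> tour_edges ((a @ b) @ rest)"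
    using edges(2) zsp(3) zs(2) by simp
  then obtain ws where ws: "ws \<in> arrangements (nth Cs) K0" "rest = concat ws"
    using concat_arrangement_if_tour_paths[OF wf K0(2,3) _ _ set_rest] zsp(1) zs(2) a_b(1) by blast
  have "(a, b, ws) \<in> join_choices Cs r s"
    using ab ws(1) by (simp add: join_choices_def K0_def U_def)
  moreover have "c = circ_class (join_list (a, b, ws))"
    using cys(1) circ_class_eq[OF zs(1)] zs(2) ws(2) by (simp add: join_list_def)
  ultimately show ?thesis by blast
qed

lemma inj_on_join_class:
  assumes pc: "partial_circ X Cs" and m3: "length Cs \<ge> 3" and rs: "r < length Cs" "s < length Cs"
    "r \<noteq> s"
  shows "inj_on (\<lambda>p. circ_class (join_list p)) (join_choices Cs r s)"
proof (rule inj_onI)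
  fix p1 p2 assume p1: "p1 \<in> join_choices Cs r s" and p2: "p2 \<in> join_choices Cs r s"
    and eq: "circ_class (join_list p1) = circ_class (join_list p2)"
  define U where "U = {0..<length Cs}"
  define K0 where "K0 = U - {r} - {s}"
  have wf: "disjoint_blocks (nth Cs) U" using partial_circ_disjoint_blocks[OF pc]
    by (simp add: U_def)
  have K0: "K0 \<noteq> {}" "K0 \<subseteq> U" using other_blocks_props[OF m3 rs] by (auto simp: K0_def U_def)
  have rU: "r \<in> U" "s \<in> U" using rs by (auto simp: U_def)
  obtain a1 b1 ws1 a2 b2 ws2 where q: "p1 = (a1, b1, ws1)" "p2 = (a2, b2, ws2)"
    by (cases p1, cases p2) auto
  have m1: "a1 \<in> orientations (Cs ! r)" "b1 \<in> orientations (Cs ! s)"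
    "ws1 \<in> arrangements (nth Cs) K0"
    and m2: "a2 \<in> orientations (Cs ! r)" "b2 \<in> orientations (Cs ! s)"
      "ws2 \<in> arrangements (nth Cs) K0"
    using p1 p2 q by (auto simp: join_choices_def K0_def U_def)
  have ne: "a1 \<noteq> []" "b1 \<noteq> []" "a2 \<noteq> []"
    using disjoint_blocks_orientation(1)[OF wf] m1 m2 rU by blast+
  have ne1: "a1 @ b1 \<noteq> []" using ne by simp
  have ne2: "concat ws1 \<noteq> []" using concat_arrangement_nonempty[OF wf K0(2,1) m1(3)] .
  have dist: "distinct ((a1 @ b1) @ concat ws1)"
    using join_list_props(1)[OF pc rs p1] q by (simp add: join_list_def)
  have mem: "(a2 @ b2) @ concat ws2 \<in> circ_class ((a1 @ b1) @ concat ws1)"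
    using eq circ_class_refl[of "join_list p2"] q by (simp add: join_list_def)
  have len: "length (a2 @ b2) = length (a1 @ b1)" and set: "set (a2 @ b2) = set (a1 @ b1)"
    using orientations_D(1,2) m1(1,2) m2(1,2) by (metis length_append set_append)+
  have "(a2 @ b2) @ concat ws2 = (a1 @ b1) @ concat ws1
      \<or> (a2 @ b2) @ concat ws2 = rev (a1 @ b1) @ rev (concat ws1)"
    by (rule circ_class_fixed_block[OF dist ne1 ne2 mem len set])
  then show "p1 = p2"
  proof
    assume "(a2 @ b2) @ concat ws2 = (a1 @ b1) @ concat ws1"
    moreover have "length a2 = length a1" "length (a2 @ b2) = length (a1 @ b1)"
      using orientations_D(2) m1(1,2) m2(1,2) by (metis length_append)+
    ultimately have "a2 = a1" "b2 = b1" "concat ws2 = concat ws1" by auto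
    moreover have "ws1 = ws2"
      using concat_arrangement_inj[OF wf K0(2) K0(2) m1(3) m2(3)] \<open>concat ws2 = concat ws1\<close> by simp
    ultimately show ?thesis using q by simp
  next
    assume "(a2 @ b2) @ concat ws2 = rev (a1 @ b1) @ rev (concat ws1)"
    then have "a2 @ b2 = rev b1 @ rev a1" using len
      by (metis append_eq_append_conv length_rev rev_append)
    then have "hd a2 = hd (rev b1)" using ne by (metis hd_append2 rev_is_Nil_conv)
    moreover have "hd a2 \<in> set (Cs ! r)" using hd_orientation_in_block[OF wf rU(1) m2(1)] by simp
    moreover have "hd (rev b1) \<in> set (Cs ! s)" using ne orientations_D(1)[OF m1(2)]
      by (metis hd_in_set rev_is_Nil_conv set_rev)
    ultimately show ?thesis using disjoint_blocks_disjoint[OF wf rU rs(3)] by auto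
  qed
qed

lemma o_join_eq_image:
  assumes "partial_circ X Cs" "length Cs \<ge> 3" "r < length Cs" "s < length Cs" "r \<noteq> s"
  shows "o_join X Cs r s = (\<lambda>p. circ_class (join_list p)) ` join_choices Cs r s"
  using o_join_from_join_choice[OF assms] join_class_in_o_join[OF assms(1,3-5)] by blast

section \<open>The average tour length\<close>

lemma tour_len_join_list:
  assumes "a \<noteq> []" "b \<noteq> []" "\<forall>w\<in>set ws. w \<noteq> []"
  shows "tour_len d (a @ b @ concat ws)
       = path_len d a + d (last a) (hd b) + path_len d b + chain_len d (last b) ws (hd a)"
proof -
  have "tour_len d ((a @ b) @ concat ws)
      = path_len d ((a @ b) @ concat ws) + d (last ((a @ b) @ concat ws)) (hd a)"
    using assms(1) by (simp add: tour_len_def)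
  also have "\<dots> = path_len d (a @ b) + chain_len d (last (a @ b)) ws (hd a)"
    using path_len_append_chain_len[of "a @ b" ws d "hd a"] assms by simp
  also have "\<dots> = path_len d a + d (last a) (hd b) + path_len d b + chain_len d (last b) ws (hd a)"
    using assms by (simp add: path_len_append)
  finally show ?thesis by simp
qed

lemma mu_avg_sum_divide:
  "mu_avg B (\<lambda>z. (\<Sum>t\<in>K. f t z) / c) = (\<Sum>t\<in>K. mu_avg B (f t)) / c"
  by (simp add: mu_avg_def sum_distrib_left sum_divide_distrib sum.swap[of _ "set B"] algebra_simps)

lemma sum_orientations_hd_last:
  assumes "B \<noteq> []" "distinct B"
  shows "(\<Sum>w\<in>orientations B. f (hd w) + g (last w))
       = real (card (orientations B)) * (mu_avg B f + mu_avg B g)"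
  by (simp add: sum.distrib sum_orientations_ends[OF assms] distrib_left)

lemma sum_tour_len_arrangements:
  assumes "disjoint_blocks blk U" "sym_fun d" "finite K" "K \<subseteq> U" "K \<noteq> {}" "a \<noteq> []" "b \<noteq> []"
  defines "G \<equiv> \<lambda>z. (\<Sum>t\<in>K. end_dist d (blk t) z) / real (card K)"
  shows "(\<Sum>ws\<in>arrangements blk K. tour_len d (a @ b @ concat ws))
       = real (card (arrangements blk K)) * (path_len d a + path_len d b + inner_len d blk K
          + ends_dist_sum d blk K / real (card K) + G (hd a) + (d (last a) (hd b) + G (last b)))"
proof -
  have "\<forall>w\<in>set ws. w \<noteq> []" if "ws \<in> arrangements blk K" for ws
    using arrangement_elem_orientation[OF that] disjoint_blocks_orientation(1)[OF assms(1)] assms(4)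
    by blast
  then have "(\<Sum>ws\<in>arrangements blk K. tour_len d (a @ b @ concat ws))
      = (\<Sum>ws\<in>arrangements blk K. path_len d a + d (last a) (hd b) + path_len d b
          + chain_len d (last b) ws (hd a))"
    using tour_len_join_list[OF assms(6,7)] by (intro sum.cong refl) simp
  also have "\<dots> = real (card (arrangements blk K)) * (path_len d a + d (last a) (hd b) + path_len d b
      + inner_len d blk K + link_avg d blk K (last b) (hd a))"
    using sum_chain_len_arrangements[OF assms(1-4)] by (simp add: sum.distrib algebra_simps)
  finally show ?thesis
    using assms(5) by (simp add: link_avg_def G_def sum.distrib add_divide_distrib algebra_simps)
qed

lemma sum_remove_two:
  "finite U \<Longrightarrow> r \<in> U \<Longrightarrow> s \<in> U \<Longrightarrow> r \<noteq> s \<Longrightarrow> sum f U = f r + f s + sum f (U - {r} - {s})"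
  using sum.remove[of U r f] sum.remove[of "U - {r}" s f] by (simp add: add.assoc)

lemma sum_orientations_pair:
  assumes "A \<noteq> []" "distinct A" "B \<noteq> []" "distinct B"
  shows "(\<Sum>a\<in>orientations A. \<Sum>b\<in>orientations B. f (hd a) + (d (last a) (hd b) + g (last b)))
       = real (card (orientations A)) * real (card (orientations B))
         * (mu_avg A f + ends_dist d A B + mu_avg B g)"
proof -
  have inner: "(\<Sum>b\<in>orientations B. f (hd a) + (d (last a) (hd b) + g (last b)))
      = real (card (orientations B)) * (f (hd a) + end_dist d B (last a) + mu_avg B g)" for a
    using sum_orientations_hd_last[OF assms(3,4), of "d (last a)" g]
    by (simp add: sum.distrib end_dist_def algebra_simps)
  have "(\<Sum>a\<in>orientations A. \<Sum>b\<in>orientations B. f (hd a) + (d (last a) (hd b) + g (last b)))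
      = real (card (orientations B)) * ((\<Sum>a\<in>orientations A. f (hd a) + end_dist d B (last a))
         + real (card (orientations A)) * mu_avg B g)"
    unfolding inner by (simp add: sum_distrib_left[symmetric] sum.distrib)
  also have "\<dots> = real (card (orientations A)) * real (card (orientations B))
      * (mu_avg A f + mu_avg A (end_dist d B) + mu_avg B g)"
    unfolding sum_orientations_hd_last[OF assms(1,2)] by (simp add: algebra_simps)
  finally show ?thesis by (simp add: ends_dist_def end_dist_def[abs_def])
qed

lemma sum_tour_len_join_choices:
  assumes pc: "partial_circ X Cs" and m3: "length Cs \<ge> 3"
    and rs: "r < length Cs" "s < length Cs" "r \<noteq> s" and sy: "sym_fun d"
  defines "K0 \<equiv> {0..<length Cs} - {r} - {s}"
  shows "(\<Sum>p\<in>join_choices Cs r s. tour_len d (join_list p))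
       = real (card (join_choices Cs r s)) * (inner_len d (nth Cs) {0..<length Cs}
          + ends_dist d (Cs ! r) (Cs ! s)
          + ((\<Sum>t\<in>K0. ends_dist d (Cs ! r) (Cs ! t) + ends_dist d (Cs ! s) (Cs ! t))
          + ends_dist_sum d (nth Cs) K0) / (real (length Cs) - 2))"
proof -
  define U where "U = {0..<length Cs}"
  define M where "M = real (length Cs) - 2"
  define G where "G z = (\<Sum>t\<in>K0. end_dist d (Cs ! t) z) / M" for z
  define N0 where "N0 = real (card (arrangements (nth Cs) K0))"
  define C where "C = inner_len d (nth Cs) U + ends_dist_sum d (nth Cs) K0 / M"
  have wf: "disjoint_blocks (nth Cs) U" using partial_circ_disjoint_blocks[OF pc]
    by (simp add: U_def)
  have K0: "K0 \<noteq> {}" "finite K0" "K0 \<subseteq> U" "real (card K0) = M"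
    using other_blocks_props[OF m3 rs] unfolding K0_def U_def M_def by auto
  have rU: "r \<in> U" "s \<in> U" using rs by (auto simp: U_def)
  have blk: "Cs ! t \<noteq> []" "distinct (Cs ! t)" if "t \<in> U" for t
    using wf that unfolding disjoint_blocks_def by auto
  have inner:
    "inner_len d (nth Cs) U = path_len d (Cs ! r) + path_len d (Cs ! s) + inner_len d (nth Cs) K0"
    using sum_remove_two[of U r s] rU rs(3) by (simp add: inner_len_def K0_def U_def)
  have mu_G: "mu_avg (Cs ! u) G = (\<Sum>t\<in>K0. ends_dist d (Cs ! u) (Cs ! t)) / M" for u
    unfolding G_def[abs_def] mu_avg_sum_divide by (simp add: ends_dist_def end_dist_def)
  have per_ab: "(\<Sum>ws\<in>arrangements (nth Cs) K0. tour_len d (a @ b @ concat ws))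
      = N0 * C + N0 * (G (hd a) + (d (last a) (hd b) + G (last b)))"
    if a: "a \<in> orientations (Cs ! r)" and b: "b \<in> orientations (Cs ! s)" for a b
    using sum_tour_len_arrangements[OF wf sy K0(2,3,1)] disjoint_blocks_orientation(1)[OF wf] rU a b
      orientations_D(6)[OF _ sy] K0(4) inner
    by (simp add: C_def G_def N0_def algebra_simps)
  have "(\<Sum>p\<in>join_choices Cs r s. tour_len d (join_list p))
      = (\<Sum>a\<in>orientations (Cs ! r). \<Sum>b\<in>orientations (Cs ! s). \<Sum>ws\<in>arrangements (nth Cs) K0.
           tour_len d (a @ b @ concat ws))"
    unfolding join_choices_def K0_def join_list_def
    by (simp add: sum.cartesian_product split_beta)
  also have "\<dots> = (\<Sum>a\<in>orientations (Cs ! r). \<Sum>b\<in>orientations (Cs ! s).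
      N0 * C + N0 * (G (hd a) + (d (last a) (hd b) + G (last b))))"
    by (intro sum.cong refl) (simp add: per_ab)
  also have "\<dots> = (\<Sum>a\<in>orientations (Cs ! r). real (card (orientations (Cs ! s))) * (N0 * C)
      + N0 * (\<Sum>b\<in>orientations (Cs ! s). G (hd a) + (d (last a) (hd b) + G (last b))))"
    by (intro sum.cong refl) (simp add: sum.distrib sum_distrib_left[symmetric])
  also have "\<dots> = real (card (orientations (Cs ! r))) * real (card (orientations (Cs ! s)))
      * (N0 * C)
      + N0 * (\<Sum>a\<in>orientations (Cs ! r). \<Sum>b\<in>orientations (Cs ! s).
                G (hd a) + (d (last a) (hd b) + G (last b)))"
    by (simp add: sum.distrib sum_distrib_left[symmetric] mult.assoc)
  also have "\<dots> = real (card (orientations (Cs ! r))) * real (card (orientations (Cs ! s))) * N0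
      * (C + mu_avg (Cs ! r) G + ends_dist d (Cs ! r) (Cs ! s) + mu_avg (Cs ! s) G)"
    unfolding sum_orientations_pair[OF blk[OF rU(1)] blk[OF rU(2)]] by (simp add: algebra_simps)
  also have "real (card (orientations (Cs ! r))) * real (card (orientations (Cs ! s))) * N0
      = real (card (join_choices Cs r s))"
    by (simp add: join_choices_def card_cartesian_product N0_def K0_def)
  finally show ?thesis
    by (simp add: mu_G C_def M_def U_def sum.distrib add_divide_distrib algebra_simps)
qed

text \<open>A dissimilarity map is only symmetric on \<open>X\<close>; replacing it by 0 outside \<open>X\<close> makes it
  symmetric everywhere and changes no quantity that evaluates it on \<open>X\<close> only.\<close>

definition restrict_dist :: "'a set \<Rightarrow> ('a \<Rightarrow> 'a \<Rightarrow> real) \<Rightarrow> 'a \<Rightarrow> 'a \<Rightarrow> real" where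
  "restrict_dist X d i j = (if i \<in> X \<and> j \<in> X then d i j else 0)"

lemma restrict_dist_sym: "dissim X d \<Longrightarrow> sym_fun (restrict_dist X d)"
  unfolding sym_fun_def restrict_dist_def dissim_def by auto

lemma card_join_choices_pos:
  assumes "partial_circ X Cs"
  shows "card (join_choices Cs r s) > 0"
proof -
  have orient: "card (orientations B) > 0" for B :: "'a list"
    using self_in_orientations finite_orientations card_gt_0_iff by blast
  have "real (card (arrangements (nth Cs) ({0..<length Cs} - {r} - {s})))
      = fact (card ({0..<length Cs} - {r} - {s}))
        * (\<Prod>t\<in>{0..<length Cs} - {r} - {s}. real (card (orientations (Cs ! t))))"
    by (rule card_arrangements[OF partial_circ_disjoint_blocks[OF assms(1)]]) auto
  moreover have "(\<Prod>t\<in>{0..<length Cs} - {r} - {s}. real (card (orientations (Cs ! t)))) > 0"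
    using orient by (simp add: prod_pos)
  ultimately have "real (card (arrangements (nth Cs) ({0..<length Cs} - {r} - {s}))) > 0" by simp
  then show ?thesis using orient by (simp add: join_choices_def card_cartesian_product)
qed

lemma l_join_eq_average:
  assumes dis: "dissim X d" and pc: "partial_circ X Cs" and m3: "length Cs \<ge> 3"
    and rs: "r < length Cs" "s < length Cs" "r \<noteq> s"
  shows "l_join X d Cs r s = (\<Sum>p\<in>join_choices Cs r s. tour_len (restrict_dist X d) (join_list p))
    / (2 * real (card (join_choices Cs r s)))"
proof -
  define F where "F p = circ_class (join_list p)" for p :: "nat list \<times> nat list \<times> nat list list"
  have half: "class_half_tour d (F p) = tour_len (restrict_dist X d) (join_list p) / 2"
    if p: "p \<in> join_choices Cs r s" for p
  proof -
    define zs where "zs = (SOME ys. ys \<in> F p)"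
    have zs: "zs \<in> circ_class (join_list p)" unfolding zs_def F_def using circ_class_refl
      by (rule someI)
    have zsp: "set zs = X" "zs \<noteq> []"
      "tour_len (restrict_dist X d) zs = tour_len (restrict_dist X d) (join_list p)"
      using circ_class_D[OF zs] join_list_props[OF pc rs p] restrict_dist_sym[OF dis] by auto
    have "half_tour d zs = half_tour (restrict_dist X d) zs"
      unfolding half_tour_def using zsp(1,2) by (intro arg_cong[where f = "\<lambda>x. 1/2 * x"] sum.cong)
        (auto simp: restrict_dist_def)
    then show ?thesis using half_tour_eq_tour_len[OF zsp(2)] zsp(3)
      by (simp add: class_half_tour_def zs_def)
  qed
  have "l_join X d Cs r s = (\<Sum>p\<in>join_choices Cs r s. class_half_tour d (F p))
      / real (card (join_choices Cs r s))"
    using o_join_eq_image[OF pc m3 rs] inj_on_join_class[OF pc m3 rs]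
    by (simp add: l_join_def F_def sum.reindex card_image)
  then show ?thesis by (simp add: half sum_divide_distrib[symmetric])
qed

lemma blk_dist_eq_ends_dist:
  assumes "partial_circ X Cs" "t < length Cs" "u < length Cs"
  shows "blk_dist d Cs t u = ends_dist (restrict_dist X d) (Cs ! t) (Cs ! u)"
proof -
  have "set (Cs ! v) \<subseteq> X" if "v < length Cs" for v
    using partial_circ_UN_blocks[OF assms(1)] that by auto
  then have "blk_dist d Cs t u = (\<Sum>i\<in>set (Cs ! t). \<Sum>j\<in>set (Cs ! u).
      mu_block (Cs ! t) i * mu_block (Cs ! u) j * restrict_dist X d i j)"
    unfolding blk_dist_def using mu_eq_mu_block[OF assms(1)] assms(2,3)
    by (intro sum.cong refl) (auto simp: restrict_dist_def)
  then show ?thesis by (simp add: ends_dist_def mu_avg_def sum_distrib_left algebra_simps)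
qed

lemma sum_lower_triangle:
  fixes m :: nat
  assumes "\<And>t u. f t u = f u t"
  shows "(\<Sum>u<m. \<Sum>t<u. f t u) = (1/2) * (\<Sum>t\<in>{..<m}. \<Sum>u\<in>{..<m} - {t}. f t u :: real)"
proof (induction m)
  case 0 then show ?case by simp
next
  case (Suc m)
  have A: "(\<Sum>t\<in>{..<Suc m}. \<Sum>u\<in>{..<Suc m} - {t}. f t u)
      = (\<Sum>t\<in>{..<m}. \<Sum>u\<in>{..<Suc m} - {t}. f t u) + (\<Sum>u\<in>{..<m}. f m u)"
    by (simp add: lessThan_Suc)
  have B: "(\<Sum>u\<in>{..<Suc m} - {t}. f t u) = (\<Sum>u\<in>{..<m} - {t}. f t u) + f t m" if "t < m" for t
  proof -
    have "{..<Suc m} - {t} = insert m ({..<m} - {t})" using that by auto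
    then show ?thesis by simp
  qed
  have "(\<Sum>t\<in>{..<Suc m}. \<Sum>u\<in>{..<Suc m} - {t}. f t u)
      = (\<Sum>t\<in>{..<m}. \<Sum>u\<in>{..<m} - {t}. f t u) + (\<Sum>t<m. f t m) + (\<Sum>u\<in>{..<m}. f m u)"
    unfolding A by (simp add: B sum.distrib)
  also have "(\<Sum>u\<in>{..<m}. f m u) = (\<Sum>t<m. f t m)" using assms by simp
  finally show ?case using Suc.IH by simp
qed

lemma sum_pairs_remove_two:
  fixes f :: "'i \<Rightarrow> 'i \<Rightarrow> real"
  assumes "finite U" "r \<in> U" "s \<in> U" "r \<noteq> s" "\<And>t u. f t u = f u t"
  defines "K \<equiv> U - {r} - {s}"
  shows "(\<Sum>t\<in>U. \<Sum>u\<in>U - {t}. f t u)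
       = 2 * f r s + 2 * (\<Sum>t\<in>K. f r t + f s t) + (\<Sum>t\<in>K. \<Sum>u\<in>K - {t}. f t u)"
proof -
  have row: "(\<Sum>u\<in>U - {t}. f t u) = f t r + f t s + (\<Sum>u\<in>K - {t}. f t u)" if "t \<in> K" for t
  proof -
    have "r \<in> U - {t}" "s \<in> U - {t}" "U - {t} - {r} - {s} = K - {t}" using that assms(2,3)
      by (auto simp: K_def)
    then show ?thesis using sum_remove_two[of "U - {t}" r s "f t"] assms(1,4) by simp
  qed
  have "(\<Sum>t\<in>U. \<Sum>u\<in>U - {t}. f t u) = (\<Sum>u\<in>U - {r}. f r u) + (\<Sum>u\<in>U - {s}. f s u)
      + (\<Sum>t\<in>K. \<Sum>u\<in>U - {t}. f t u)"
    using sum_remove_two[OF assms(1-4)] by (simp add: K_def)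
  also have "(\<Sum>u\<in>U - {r}. f r u) = f r s + (\<Sum>t\<in>K. f r t)"
    using sum.remove[of "U - {r}" s "f r"] assms(1,3,4) by (simp add: K_def)
  also have "(\<Sum>u\<in>U - {s}. f s u) = f r s + (\<Sum>t\<in>K. f s t)"
  proof -
    have "U - {s} - {r} = K" by (auto simp: K_def)
    then show ?thesis using sum.remove[of "U - {s}" r "f s"] assms(1,2,4,5) by simp
  qed
  also have "(\<Sum>t\<in>K. \<Sum>u\<in>U - {t}. f t u) = (\<Sum>t\<in>K. f r t + f s t) + (\<Sum>t\<in>K. \<Sum>u\<in>K - {t}. f t u)"
    using row assms(5) by (simp add: sum.distrib)
  finally show ?thesis by (simp add: sum.distrib)
qed

lemma Q_delta_eq_ends_dist:
  assumes dis: "dissim X d" and pc: "partial_circ X Cs" and rs: "r < length Cs" "s < length Cs"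
    "r \<noteq> s"
  defines "D \<equiv> \<lambda>t u. ends_dist (restrict_dist X d) (Cs ! t) (Cs ! u)"
    and "K0 \<equiv> {0..<length Cs} - {r} - {s}"
  shows "Q_delta d Cs r s = (real (length Cs) - 2) * D r s - 2 * D r s - (\<Sum>t\<in>K0. D r t + D s t)"
proof -
  have bd: "blk_dist d Cs t u = D t u" if "t \<in> {0..<length Cs}" "u \<in> {0..<length Cs}" for t u
    using blk_dist_eq_ends_dist[OF pc] that by (simp add: D_def)
  have sym: "D t u = D u t" for t u
    using ends_dist_sym[OF restrict_dist_sym[OF dis]] by (simp add: D_def)
  have "(\<Sum>t\<in>{0..<length Cs} - {r}. blk_dist d Cs r t) = (\<Sum>t\<in>{0..<length Cs} - {r}. D r t)"
    using bd rs by (intro sum.cong) auto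
  also have "\<dots> = D r s + (\<Sum>t\<in>K0. D r t)"
    using sum.remove[of "{0..<length Cs} - {r}" s "D r"] rs by (simp add: K0_def)
  finally have row_r: "(\<Sum>t\<in>{0..<length Cs} - {r}. blk_dist d Cs r t) = D r s + (\<Sum>t\<in>K0. D r t)" .
  have "(\<Sum>t\<in>{0..<length Cs} - {s}. blk_dist d Cs s t) = (\<Sum>t\<in>{0..<length Cs} - {s}. D s t)"
    using bd rs by (intro sum.cong) auto
  also have "\<dots> = D r s + (\<Sum>t\<in>K0. D s t)"
  proof -
    have "{0..<length Cs} - {s} - {r} = K0" by (auto simp: K0_def)
    then show ?thesis using sum.remove[of "{0..<length Cs} - {s}" r "D s"] rs sym by simp
  qed
  finally have row_s: "(\<Sum>t\<in>{0..<length Cs} - {s}. blk_dist d Cs s t) = D r s + (\<Sum>t\<in>K0. D s t)" .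
  show ?thesis
    unfolding Q_delta_def row_r row_s using bd rs by (simp add: sum.distrib)
qed

lemma T_const_eq_ends_dist:
  assumes dis: "dissim X d" and pc: "partial_circ X Cs" and rs: "r < length Cs" "s < length Cs"
    "r \<noteq> s"
  defines "d' \<equiv> restrict_dist X d"
  defines "D \<equiv> \<lambda>t u. ends_dist d' (Cs ! t) (Cs ! u)"
    and "K0 \<equiv> {0..<length Cs} - {r} - {s}"
  shows "T_const d Cs = inner_len d' (nth Cs) {0..<length Cs} / 2
    + (2 * D r s + 2 * (\<Sum>t\<in>K0. D r t + D s t) + ends_dist_sum d' (nth Cs) K0)
      / (2 * (real (length Cs) - 2))"
proof -
  have inX: "set (Cs ! t) \<subseteq> X" if "t < length Cs" for t
    using partial_circ_UN_blocks[OF pc] that by auto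
  have sym: "D t u = D u t" for t u
    using ends_dist_sym[OF restrict_dist_sym[OF dis]] by (simp add: D_def d'_def)
  have "(\<Sum>B\<leftarrow>Cs. \<Sum>k<length B - 1. d (B ! k) (B ! (k + 1)))
      = (\<Sum>t\<in>{0..<length Cs}. path_len d (Cs ! t))"
    by (simp add: path_len_conv_sum sum_list_sum_nth)
  also have "\<dots> = inner_len d' (nth Cs) {0..<length Cs}"
    unfolding inner_len_def d'_def using inX
    by (intro sum.cong refl path_len_cong) (auto simp: restrict_dist_def)
  finally have paths: "(\<Sum>B\<leftarrow>Cs. \<Sum>k<length B - 1. d (B ! k) (B ! (k + 1)))
      = inner_len d' (nth Cs) {0..<length Cs}" .
  have "(\<Sum>u<length Cs. \<Sum>t<u. blk_dist d Cs t u) = (\<Sum>u<length Cs. \<Sum>t<u. D t u)"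
    using blk_dist_eq_ends_dist[OF pc] by (intro sum.cong refl) (simp add: D_def d'_def)
  also have "\<dots> = 1/2 * (\<Sum>t\<in>{0..<length Cs}. \<Sum>u\<in>{0..<length Cs} - {t}. D t u)"
    using sum_lower_triangle[of D "length Cs"] sym by (simp add: atLeast0LessThan)
  also have "(\<Sum>t\<in>{0..<length Cs}. \<Sum>u\<in>{0..<length Cs} - {t}. D t u)
      = 2 * D r s + 2 * (\<Sum>t\<in>K0. D r t + D s t) + ends_dist_sum d' (nth Cs) K0"
    using sum_pairs_remove_two[of "{0..<length Cs}" r s D] rs sym
    by (simp add: K0_def ends_dist_sum_def D_def)
  finally have pairs: "(\<Sum>u<length Cs. \<Sum>t<u. blk_dist d Cs t u)
      = (2 * D r s + 2 * (\<Sum>t\<in>K0. D r t + D s t) + ends_dist_sum d' (nth Cs) K0) / 2" by simp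
  show ?thesis unfolding T_const_def paths pairs by (simp add: mult.commute)
qed

lemma l_join_formula:
  assumes dis: "dissim X d" and pc: "partial_circ X Cs" and m3: "length Cs \<ge> 3"
    and rs: "r < length Cs" "s < length Cs" "r \<noteq> s"
  shows "l_join X d Cs r s = (1 / (2 * (real (length Cs) - 2))) * Q_delta d Cs r s + T_const d Cs"
proof -
  define d' where "d' = restrict_dist X d"
  define D where "D t u = ends_dist d' (Cs ! t) (Cs ! u)" for t u
  define K0 where "K0 = {0..<length Cs} - {r} - {s}"
  define M where "M = real (length Cs) - 2"
  have "M > 0" using m3 by (simp add: M_def)
  have "l_join X d Cs r s = (inner_len d' (nth Cs) {0..<length Cs} + D r s
      + ((\<Sum>t\<in>K0. D r t + D s t) + ends_dist_sum d' (nth Cs) K0) / M) / 2"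
    using l_join_eq_average[OF dis pc m3 rs] card_join_choices_pos[OF pc]
      sum_tour_len_join_choices[OF pc m3 rs restrict_dist_sym[OF dis]]
    by (simp add: d'_def D_def K0_def M_def)
  moreover have "Q_delta d Cs r s = M * D r s - 2 * D r s - (\<Sum>t\<in>K0. D r t + D s t)"
    using Q_delta_eq_ends_dist[OF dis pc rs] by (simp add: D_def d'_def K0_def M_def)
  moreover have "T_const d Cs = inner_len d' (nth Cs) {0..<length Cs} / 2
      + (2 * D r s + 2 * (\<Sum>t\<in>K0. D r t + D s t) + ends_dist_sum d' (nth Cs) K0) / (2 * M)"
    using T_const_eq_ends_dist[OF dis pc rs] by (simp add: D_def d'_def K0_def M_def)
  ultimately show ?thesis using \<open>M > 0\<close> by (simp add: M_def[symmetric] field_simps)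
qed

theorem mainTheorem4:
  fixes n :: nat and d :: "nat \<Rightarrow> nat \<Rightarrow> real" and Cs :: "nat list list" and r s :: nat
  assumes "n \<ge> 3"
    and "dissim {1..n} d"
    and "partial_circ {1..n} Cs"
    and "length Cs \<ge> 3"
    and "r < length Cs" and "s < length Cs" and "r \<noteq> s"
  shows "l_join {1..n} d Cs r s
           = (1 / (2 * (real (length Cs) - 2))) * Q_delta d Cs r s + T_const d Cs
         \<and> ((\<forall>r' s'. r' < length Cs \<longrightarrow> s' < length Cs \<longrightarrow> r' \<noteq> s' \<longrightarrow>
              l_join {1..n} d Cs r s \<le> l_join {1..n} d Cs r' s')
         \<longleftrightarrow> (\<forall>r' s'. r' < length Cs \<longrightarrow> s' < length Cs \<longrightarrow> r' \<noteq> s' \<longrightarrow>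
              Q_delta d Cs r s \<le> Q_delta d Cs r' s'))"
proof -
  define c where "c = 1 / (2 * (real (length Cs) - 2))"
  have "c > 0" using assms(4) by (simp add: c_def)
  have eq: "l_join {1..n} d Cs r' s' = c * Q_delta d Cs r' s' + T_const d Cs"
    if "r' < length Cs" "s' < length Cs" "r' \<noteq> s'" for r' s'
    using l_join_formula[OF assms(2-4) that] by (simp add: c_def)
  have "l_join {1..n} d Cs r s \<le> l_join {1..n} d Cs r' s' \<longleftrightarrow> Q_delta d Cs r s \<le> Q_delta d Cs r' s'"
    if "r' < length Cs" "s' < length Cs" "r' \<noteq> s'" for r' s'
    using eq[OF that] eq[OF assms(5-7)] \<open>c > 0\<close> by simp
  then show ?thesis using eq[OF assms(5-7)] by (simp add: c_def)
qed

end
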